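(* Let $\mathbf{I}$ be a $d$-system of ideals in a ring $R$ and $A:=\mathscr{A}(R,\mathbf{I})$. The chain of idempotent ideals $0=J_d\subset J_{d-1}\subset\cdots\subset J_1\subset J_0=A$ has the property that, for every $1\le i\le d$, the left $A/J_i$-module $J_{i-1}/J_i$ is projective, and there is a ring isomorphism $e_i(A/J_i)e_i\cong R/I_{i,i+1}$.
   Context: A $d$-system of ideals in $R$ is a collection $\{I_{ij}\mid1\le i,j\le d+1\}$ of two-sided ideals with $I_{ij}I_{jk}\subset I_{ik}$ and $I_{ij}=R$ for $i\ge j$. $\mathscr{A}(R,\mathbf{I}):=\bigoplus_{1\le i,j\le d}I_{ij}/I_{i,d+1}$ with multiplication $(x+I_{i,d+1})(y+I_{k,d+1})=\delta_{jk}(xy+I_{i,d+1})\in I_{il}/I_{i,d+1}$ for $x\in I_{ij},y\in I_{kl}$. Put $e_k:=1+I_{k,d+1}\in I_{kk}/I_{k,d+1}$ for $1\le k\le d$, $f_j:=\sum_{k>j}e_k$ for $0\le j\le d$ ($f_0=1$, $f_d=0$), and $J_j:=Af_jA$. *)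

theory Defs
  imports "HOL-Algebra.Algebra"
begin

definition d_system :: "('a, 'c) ring_scheme \<Rightarrow> nat \<Rightarrow> (nat \<Rightarrow> nat \<Rightarrow> 'a set) \<Rightarrow> bool" where
  "d_system R d I \<longleftrightarrow>
     (\<forall>i j. i \<in> {1..d+1} \<and> j \<in> {1..d+1} \<longrightarrow> ideal (I i j) R) \<and>
     (\<forall>i j k. i \<in> {1..d+1} \<and> j \<in> {1..d+1} \<and> k \<in> {1..d+1} \<longrightarrow>
         I i j \<cdot>\<^bsub>R\<^esub> I j k \<subseteq> I i k) \<and>
     (\<forall>i j. i \<in> {1..d+1} \<and> j \<in> {1..d+1} \<and> j \<le> i \<longrightarrow> I i j = carrier R)"

text \<open>Elements are d\<times>d matrices whose (i,j) entry lies in I_ij / I_{i,d+1}; the entries are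
  represented as additive cosets of I_{i,d+1}. Entries outside {1..d}\<times>{1..d} are {} .\<close>

definition A_carrier :: "('a, 'c) ring_scheme \<Rightarrow> nat \<Rightarrow> (nat \<Rightarrow> nat \<Rightarrow> 'a set)
    \<Rightarrow> (nat \<Rightarrow> nat \<Rightarrow> 'a set) set" where
  "A_carrier R d I = {a.
     (\<forall>i j. i \<in> {1..d} \<and> j \<in> {1..d} \<longrightarrow> (\<exists>x \<in> I i j. a i j = I i (d+1) +>\<^bsub>R\<^esub> x)) \<and>
     (\<forall>i j. \<not> (i \<in> {1..d} \<and> j \<in> {1..d}) \<longrightarrow> a i j = {})}"

definition A_zero :: "('a, 'c) ring_scheme \<Rightarrow> nat \<Rightarrow> (nat \<Rightarrow> nat \<Rightarrow> 'a set)
    \<Rightarrow> nat \<Rightarrow> nat \<Rightarrow> 'a set" where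
  "A_zero R d I = (\<lambda>i j. if i \<in> {1..d} \<and> j \<in> {1..d} then I i (d+1) else {})"

definition A_one :: "('a, 'c) ring_scheme \<Rightarrow> nat \<Rightarrow> (nat \<Rightarrow> nat \<Rightarrow> 'a set)
    \<Rightarrow> nat \<Rightarrow> nat \<Rightarrow> 'a set" where
  "A_one R d I = (\<lambda>i j. if i \<in> {1..d} \<and> j \<in> {1..d}
       then (if i = j then I i (d+1) +>\<^bsub>R\<^esub> \<one>\<^bsub>R\<^esub> else I i (d+1)) else {})"

definition A_add :: "('a, 'c) ring_scheme \<Rightarrow> (nat \<Rightarrow> nat \<Rightarrow> 'a set) \<Rightarrow> (nat \<Rightarrow> nat \<Rightarrow> 'a set)
    \<Rightarrow> nat \<Rightarrow> nat \<Rightarrow> 'a set" where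
  "A_add R a b = (\<lambda>i j. a i j <+>\<^bsub>R\<^esub> b i j)"

text \<open>Matrix multiplication: (ab)_il = sum_j x_ij y_jl + I_{i,d+1}, for representatives
  x_ij of a_ij and y_jl of b_jl (independent of the choice of representatives).\<close>
definition A_mult :: "('a, 'c) ring_scheme \<Rightarrow> nat \<Rightarrow> (nat \<Rightarrow> nat \<Rightarrow> 'a set)
    \<Rightarrow> (nat \<Rightarrow> nat \<Rightarrow> 'a set) \<Rightarrow> (nat \<Rightarrow> nat \<Rightarrow> 'a set) \<Rightarrow> nat \<Rightarrow> nat \<Rightarrow> 'a set" where
  "A_mult R d I a b = (\<lambda>i l. if i \<in> {1..d} \<and> l \<in> {1..d} then
       \<Union> { I i (d+1) +>\<^bsub>R\<^esub> (\<Oplus>\<^bsub>R\<^esub>j\<in>{1..d}. x j \<otimes>\<^bsub>R\<^esub> y j) | x y.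
             \<forall>j \<in> {1..d}. x j \<in> a i j \<and> y j \<in> b j l }
     else {})"

definition A_ring :: "('a, 'c) ring_scheme \<Rightarrow> nat \<Rightarrow> (nat \<Rightarrow> nat \<Rightarrow> 'a set)
    \<Rightarrow> (nat \<Rightarrow> nat \<Rightarrow> 'a set) ring" where
  "A_ring R d I = \<lparr> partial_object.carrier = A_carrier R d I, monoid.mult = A_mult R d I,
      monoid.one = A_one R d I, ring.zero = A_zero R d I, ring.add = A_add R \<rparr>"

definition A_e :: "('a, 'c) ring_scheme \<Rightarrow> nat \<Rightarrow> (nat \<Rightarrow> nat \<Rightarrow> 'a set)
    \<Rightarrow> nat \<Rightarrow> nat \<Rightarrow> nat \<Rightarrow> 'a set" where
  "A_e R d I k = (\<lambda>i j. if i = k \<and> j = k \<and> k \<in> {1..d} then I k (d+1) +>\<^bsub>R\<^esub> \<one>\<^bsub>R\<^esub>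
                        else A_zero R d I i j)"

definition A_f :: "('a, 'c) ring_scheme \<Rightarrow> nat \<Rightarrow> (nat \<Rightarrow> nat \<Rightarrow> 'a set)
    \<Rightarrow> nat \<Rightarrow> nat \<Rightarrow> nat \<Rightarrow> 'a set" where
  "A_f R d I j = (\<Oplus>\<^bsub>A_ring R d I\<^esub>k\<in>{j<..d}. A_e R d I k)"

definition A_J :: "('a, 'c) ring_scheme \<Rightarrow> nat \<Rightarrow> (nat \<Rightarrow> nat \<Rightarrow> 'a set)
    \<Rightarrow> nat \<Rightarrow> (nat \<Rightarrow> nat \<Rightarrow> 'a set) set" where
  "A_J R d I j = genideal (A_ring R d I) {A_f R d I j}"

definition left_module :: "('s, 'c) ring_scheme \<Rightarrow> ('s, 'm, 'e) module_scheme \<Rightarrow> bool" where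
  "left_module S M \<longleftrightarrow> ring S \<and> abelian_group M \<and>
     (\<forall>a \<in> carrier S. \<forall>x \<in> carrier M. a \<odot>\<^bsub>M\<^esub> x \<in> carrier M) \<and>
     (\<forall>a \<in> carrier S. \<forall>b \<in> carrier S. \<forall>x \<in> carrier M.
         (a \<oplus>\<^bsub>S\<^esub> b) \<odot>\<^bsub>M\<^esub> x = a \<odot>\<^bsub>M\<^esub> x \<oplus>\<^bsub>M\<^esub> b \<odot>\<^bsub>M\<^esub> x) \<and>
     (\<forall>a \<in> carrier S. \<forall>x \<in> carrier M. \<forall>y \<in> carrier M.
         a \<odot>\<^bsub>M\<^esub> (x \<oplus>\<^bsub>M\<^esub> y) = a \<odot>\<^bsub>M\<^esub> x \<oplus>\<^bsub>M\<^esub> a \<odot>\<^bsub>M\<^esub> y) \<and>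
     (\<forall>a \<in> carrier S. \<forall>b \<in> carrier S. \<forall>x \<in> carrier M.
         (a \<otimes>\<^bsub>S\<^esub> b) \<odot>\<^bsub>M\<^esub> x = a \<odot>\<^bsub>M\<^esub> (b \<odot>\<^bsub>M\<^esub> x)) \<and>
     (\<forall>x \<in> carrier M. \<one>\<^bsub>S\<^esub> \<odot>\<^bsub>M\<^esub> x = x)"

definition lmod_hom :: "('s, 'c) ring_scheme \<Rightarrow> ('s, 'm, 'e) module_scheme
    \<Rightarrow> ('s, 'n, 'f) module_scheme \<Rightarrow> ('m \<Rightarrow> 'n) set" where
  "lmod_hom S M N = {h. h \<in> carrier M \<rightarrow> carrier N \<and>
     (\<forall>x \<in> carrier M. \<forall>y \<in> carrier M. h (x \<oplus>\<^bsub>M\<^esub> y) = h x \<oplus>\<^bsub>N\<^esub> h y) \<and>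
     (\<forall>a \<in> carrier S. \<forall>x \<in> carrier M. h (a \<odot>\<^bsub>M\<^esub> x) = a \<odot>\<^bsub>N\<^esub> h x)}"

text \<open>Projectivity via the lifting property, tested against all left S-modules whose
  carrier type is 'b. (In the main theorem 'b is a free type variable, i.e. arbitrary.)\<close>
definition projective_lmod :: "'b itself \<Rightarrow> ('s, 'c) ring_scheme \<Rightarrow> ('s, 'm, 'e) module_scheme \<Rightarrow> bool" where
  "projective_lmod (TYPE('b)) S P \<longleftrightarrow> left_module S P \<and>
     (\<forall>(M :: ('s, 'b) module) (N :: ('s, 'b) module) g f.
        left_module S M \<and> left_module S N \<and> g \<in> lmod_hom S M N \<and> g ` carrier M = carrier N \<and>
        f \<in> lmod_hom S P N \<longrightarrow>
        (\<exists>h \<in> lmod_hom S P M. \<forall>p \<in> carrier P. g (h p) = f p))"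

definition quot_submodule :: "('a, 'c) ring_scheme \<Rightarrow> 'a set \<Rightarrow> 'a set \<Rightarrow> ('a set, 'a set) module" where
  "quot_submodule A K J = \<lparr> partial_object.carrier = {J +>\<^bsub>A\<^esub> x | x. x \<in> K},
      monoid.mult = rcoset_mult A J, monoid.one = J +>\<^bsub>A\<^esub> \<one>\<^bsub>A\<^esub>, ring.zero = J, ring.add = set_add A,
      smult = rcoset_mult A J \<rparr>"

definition corner_ring :: "('a, 'c) ring_scheme \<Rightarrow> 'a \<Rightarrow> 'a ring" where
  "corner_ring S e = \<lparr> partial_object.carrier = {e \<otimes>\<^bsub>S\<^esub> x \<otimes>\<^bsub>S\<^esub> e | x. x \<in> carrier S},
      monoid.mult = monoid.mult S, monoid.one = e, ring.zero = \<zero>\<^bsub>S\<^esub>, ring.add = ring.add S \<rparr>"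

end

theory Submission
  imports Defs
begin

text \<open>
  Elements of \<open>\<A>(R, I)\<close> are represented by matrices \<open>(x\<^sub>i\<^sub>j)\<close> with \<open>x\<^sub>i\<^sub>j \<in> I\<^sub>i\<^sub>j\<close>, the \<open>i\<close>-th
  row being taken modulo \<open>I\<^sub>i\<^sub>,\<^sub>d\<^sub>+\<^sub>1\<close>. The key computation is that \<open>J\<^sub>j = A f\<^sub>j A\<close> consists exactly
  of the classes of matrices whose upper left \<open>j \<times> j\<close> block has \<open>(a, b)\<close>-entry in \<open>I\<^sub>a\<^sub>,\<^sub>j\<^sub>+\<^sub>1\<close>;
  the chain \<open>0 = J\<^sub>d \<subseteq> \<dots> \<subseteq> J\<^sub>0 = A\<close> is read off from this, and \<open>J\<^sub>j\<close> is idempotent because it is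
  generated by the idempotent \<open>f\<^sub>j\<close>. The module \<open>J\<^sub>i\<^sub>-\<^sub>1 / J\<^sub>i\<close> is projective by the dual basis
  lemma, with the elements \<open>E\<^sub>i\<^sub>l\<close> (\<open>l \<le> i\<close>) and the coordinates \<open>x \<mapsto> x E\<^sub>l\<^sub>i\<close>. Finally
  \<open>r \<mapsto> r E\<^sub>i\<^sub>i + J\<^sub>i\<close> is a surjective ring homomorphism from \<open>R\<close> onto the corner ring
  \<open>e\<^sub>i (A / J\<^sub>i) e\<^sub>i\<close> with kernel \<open>I\<^sub>i\<^sub>,\<^sub>i\<^sub>+\<^sub>1\<close>.
\<close>

context ring
begin

lemma mem_a_rcos_iff:
  assumes "ideal N R" "x \<in> carrier R" "y \<in> carrier R"
  shows "x \<in> N +> y \<longleftrightarrow> x \<ominus> y \<in> N"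
  using abelian_subgroup.a_rcos_module_minus[OF ideal.axioms(1)[OF assms(1), THEN abelian_subgroupI3]]
    assms is_abelian_group ring_axioms by blast

lemma mem_a_rcos_carrier:
  assumes "ideal N R" "y \<in> carrier R" "x \<in> N +> y"
  shows "x \<in> carrier R"
  using a_r_coset_subset_G[OF additive_subgroup.a_subset[OF ideal.axioms(1)[OF assms(1)]] assms(2)]
    assms(3) by blast

lemma finsum_in_ideal:
  assumes "ideal N R" "finite S" "\<And>j. j \<in> S \<Longrightarrow> f j \<in> N"
  shows "finsum R f S \<in> N"
  using assms(2,3)
proof (induction S rule: finite_induct)
  case empty
  then show ?case using assms(1) by (simp add: additive_subgroup.zero_closed ideal.axioms(1))
next
  case (insert x F)
  then have "f \<in> F \<rightarrow> carrier R" "f x \<in> carrier R"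
    using ideal.Icarr[OF assms(1)] by auto
  with insert show ?case
    by (simp add: additive_subgroup.a_closed[OF ideal.axioms(1)[OF assms(1)]])
qed

lemma finsum_swap:
  assumes "finite A" "finite B" "\<And>a b. a \<in> A \<Longrightarrow> b \<in> B \<Longrightarrow> f a b \<in> carrier R"
  shows "(\<Oplus>a\<in>A. \<Oplus>b\<in>B. f a b) = (\<Oplus>b\<in>B. \<Oplus>a\<in>A. f a b)"
  using assms(1,3)
proof (induction A rule: finite_induct)
  case empty
  then show ?case by (simp add: finsum_zero)
next
  case (insert x F)
  have "(\<Oplus>a\<in>insert x F. \<Oplus>b\<in>B. f a b) = (\<Oplus>b\<in>B. f x b) \<oplus> (\<Oplus>a\<in>F. \<Oplus>b\<in>B. f a b)"
    using insert by (intro finsum_insert) (auto intro!: finsum_closed)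
  also have "\<dots> = (\<Oplus>b\<in>B. f x b) \<oplus> (\<Oplus>b\<in>B. \<Oplus>a\<in>F. f a b)"
    using insert by simp
  also have "\<dots> = (\<Oplus>b\<in>B. f x b \<oplus> (\<Oplus>a\<in>F. f a b))"
    using insert by (intro finsum_addf[symmetric]) (auto intro!: finsum_closed)
  also have "\<dots> = (\<Oplus>b\<in>B. \<Oplus>a\<in>insert x F. f a b)"
    using insert by (intro finsum_cong') (auto intro!: finsum_closed simp: finsum_insert)
  finally show ?case .
qed

lemma finsum_if_eq:
  assumes "finite L" "g \<in> L \<rightarrow> carrier R"
  shows "(\<Oplus>l\<in>L. if b = l then g l else \<zero>) = (if b \<in> L then g b else \<zero>)"
proof (cases "b \<in> L")
  case True
  then show ?thesis using finsum_singleton[OF True assms] by simp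
next
  case False
  then have "(\<Oplus>l\<in>L. if b = l then g l else \<zero>) = (\<Oplus>l\<in>L. \<zero>)" by (intro finsum_cong') auto
  then show ?thesis using False by simp
qed

lemma finsum_diag:
  assumes "finite K"
  shows "(\<Oplus>k\<in>K. if i = k \<and> l = k then \<one> else \<zero>) = (if i = l \<and> i \<in> K then \<one> else \<zero>)"
proof -
  have "(\<Oplus>k\<in>K. if i = k \<and> l = k then \<one> else \<zero>)
      = (\<Oplus>k\<in>K. if i = k then (if l = i then \<one> else \<zero>) else \<zero>)"
    by (intro finsum_cong') auto
  then show ?thesis using finsum_if_eq[OF assms, of "\<lambda>_. if l = i then \<one> else \<zero>" i] by auto
qed

lemma finsum_mem_a_rcos:
  assumes N: "ideal N R" and "finite S"
    and "\<And>j. j \<in> S \<Longrightarrow> f j \<in> N +> g j"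
    and "\<And>j. j \<in> S \<Longrightarrow> f j \<in> carrier R" "\<And>j. j \<in> S \<Longrightarrow> g j \<in> carrier R"
  shows "finsum R f S \<in> N +> finsum R g S"
  using assms(2-)
proof (induction S rule: finite_induct)
  case empty
  then show ?case
    using N by (simp add: additive_subgroup.zero_closed ideal.axioms(1) mem_a_rcos_iff minus_eq)
next
  case (insert x F)
  then have c: "f \<in> F \<rightarrow> carrier R" "g \<in> F \<rightarrow> carrier R" "f x \<in> carrier R" "g x \<in> carrier R"
    by auto
  have "f x \<oplus> finsum R f F \<ominus> (g x \<oplus> finsum R g F)
      = (f x \<ominus> g x) \<oplus> (finsum R f F \<ominus> finsum R g F)"
    using c finsum_closed[OF c(1)] finsum_closed[OF c(2)] by algebra
  moreover have "f x \<ominus> g x \<in> N" "finsum R f F \<ominus> finsum R g F \<in> N"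
    using insert c mem_a_rcos_iff[OF N] by (auto simp: finsum_closed)
  ultimately have "f x \<oplus> finsum R f F \<ominus> (g x \<oplus> finsum R g F) \<in> N"
    by (simp add: additive_subgroup.a_closed[OF ideal.axioms(1)[OF N]])
  then show ?case using insert c mem_a_rcos_iff[OF N] by (simp add: finsum_closed)
qed

lemma genideal_idem_prod:
  assumes "e \<in> carrier R" "e \<otimes> e = e"
  shows "(Idl {e}) \<cdot> (Idl {e}) = Idl {e}"
proof
  have I: "ideal (Idl {e}) R" using genideal_ideal assms(1) by simp
  show "(Idl {e}) \<cdot> (Idl {e}) \<subseteq> Idl {e}" using ideal_prod_inter[OF I I] by blast
  have "e \<in> (Idl {e}) \<cdot> (Idl {e})"
    using ideal_prod.prod[OF genideal_self' genideal_self'] assms by metis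
  then show "Idl {e} \<subseteq> (Idl {e}) \<cdot> (Idl {e})"
    using genideal_minimal[OF ideal_prod_is_ideal[OF I I]] by blast
qed

lemma set_add_empty: "{} <+>\<^bsub>R\<^esub> {} = {}"
  by (simp add: set_add_def set_mult_def)

lemma mem_FactRing_iff:
  assumes "ideal J R"
  shows "C \<in> carrier (R Quot J) \<longleftrightarrow> (\<exists>a\<in>carrier R. C = J +> a)"
  unfolding FactRing_def by (simp add: A_RCOSETS_def')

lemma FactRing_mult_rcos:
  assumes "ideal J R" "a \<in> carrier R" "b \<in> carrier R"
  shows "(J +> a) \<otimes>\<^bsub>R Quot J\<^esub> (J +> b) = J +> (a \<otimes> b)"
  unfolding FactRing_def using ideal.rcoset_mult_add[OF assms] by simp

lemma FactRing_add_rcos: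
  assumes "ideal J R" "a \<in> carrier R" "b \<in> carrier R"
  shows "(J +> a) \<oplus>\<^bsub>R Quot J\<^esub> (J +> b) = J +> (a \<oplus> b)"
  unfolding FactRing_def using ideal.a_rcos_sum[OF assms] by simp

lemma FactRing_one: "\<one>\<^bsub>R Quot J\<^esub> = J +> \<one>"
  unfolding FactRing_def by simp

end

section \<open>Corner rings\<close>

context ring
begin

lemma corner_ring_simps:
  "\<zero>\<^bsub>corner_ring R e\<^esub> = \<zero>"
  "\<one>\<^bsub>corner_ring R e\<^esub> = e"
  "x \<otimes>\<^bsub>corner_ring R e\<^esub> y = x \<otimes> y"
  "x \<oplus>\<^bsub>corner_ring R e\<^esub> y = x \<oplus> y"
  unfolding corner_ring_def by simp_all

lemma mem_corner_ring_iff: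
  assumes e: "e \<in> carrier R" "e \<otimes> e = e"
  shows "c \<in> carrier (corner_ring R e) \<longleftrightarrow> c \<in> carrier R \<and> e \<otimes> c \<otimes> e = c"
proof
  assume "c \<in> carrier (corner_ring R e)"
  then obtain x where x: "x \<in> carrier R" "c = e \<otimes> x \<otimes> e" unfolding corner_ring_def by auto
  have "e \<otimes> c \<otimes> e = (e \<otimes> e) \<otimes> x \<otimes> (e \<otimes> e)"
    using e(1) x by (simp add: m_assoc)
  then show "c \<in> carrier R \<and> e \<otimes> c \<otimes> e = c" using e x by simp
next
  assume "c \<in> carrier R \<and> e \<otimes> c \<otimes> e = c"
  then show "c \<in> carrier (corner_ring R e)" unfolding corner_ring_def by force
qed

lemma corner_ring_is_ring:
  assumes e: "e \<in> carrier R" "e \<otimes> e = e"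
  shows "ring (corner_ring R e)"
proof -
  let ?E = "carrier (corner_ring R e)"
  have memD: "c \<in> carrier R" "e \<otimes> c \<otimes> e = c" if "c \<in> ?E" for c
    using mem_corner_ring_iff[OF e] that by blast+
  have memI: "c \<in> ?E" if "c \<in> carrier R" "e \<otimes> c \<otimes> e = c" for c
    using mem_corner_ring_iff[OF e] that by blast
  have absorb: "e \<otimes> c = c" "c \<otimes> e = c" if "c \<in> ?E" for c
  proof -
    note c = memD[OF that]
    have "e \<otimes> c = e \<otimes> (e \<otimes> c \<otimes> e)" using c by simp
    also have "\<dots> = (e \<otimes> e) \<otimes> c \<otimes> e" using c(1) e(1) by (simp add: m_assoc)
    finally show "e \<otimes> c = c" using c e by simp
    have "c \<otimes> e = (e \<otimes> c \<otimes> e) \<otimes> e" using c by simp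
    also have "\<dots> = e \<otimes> c \<otimes> (e \<otimes> e)" using c(1) e(1) by (simp add: m_assoc)
    finally show "c \<otimes> e = c" using c e by simp
  qed
  have add_closed: "x \<oplus> y \<in> ?E" if "x \<in> ?E" "y \<in> ?E" for x y
  proof (rule memI)
    show "e \<otimes> (x \<oplus> y) \<otimes> e = x \<oplus> y"
      using memD[OF that(1)] memD[OF that(2)] e(1) by (simp add: l_distr r_distr)
  qed (use memD[OF that(1)] memD[OF that(2)] in simp)
  have neg_closed: "\<ominus> x \<in> ?E" if "x \<in> ?E" for x
  proof (rule memI)
    show "e \<otimes> (\<ominus> x) \<otimes> e = \<ominus> x"
      using memD[OF that] e(1) by (simp add: l_minus r_minus)
  qed (use memD[OF that] in simp)
  have mult_closed: "x \<otimes> y \<in> ?E" if "x \<in> ?E" "y \<in> ?E" for x y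
  proof (rule memI)
    have "e \<otimes> (x \<otimes> y) \<otimes> e = (e \<otimes> x) \<otimes> (y \<otimes> e)"
      using memD[OF that(1)] memD[OF that(2)] e(1) by (simp add: m_assoc)
    then show "e \<otimes> (x \<otimes> y) \<otimes> e = x \<otimes> y" using absorb that by simp
  qed (use memD[OF that(1)] memD[OF that(2)] in simp)
  have zero_closed: "\<zero> \<in> ?E" and one_closed: "e \<in> ?E"
    using e by (auto intro!: memI)
  show ?thesis
  proof (rule ringI)
    show "abelian_group (corner_ring R e)"
    proof (rule abelian_groupI, unfold corner_ring_simps)
      fix x assume "x \<in> ?E"
      then show "\<exists>y\<in>?E. y \<oplus> x = \<zero>" using neg_closed memD l_neg by blast
    qed (simp_all add: add_closed zero_closed memD a_ac)
    show "monoid (corner_ring R e)"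
      by (rule monoidI, unfold corner_ring_simps)
         (simp_all add: mult_closed one_closed absorb memD m_assoc)
  qed (simp_all add: corner_ring_simps memD l_distr r_distr)
qed

end

section \<open>The quotient module K/J and the dual basis lemma\<close>

lemma
  assumes "left_module S M"
  shows left_module_abelian_group: "abelian_group M"
    and left_module_smult_closed: "\<And>a x. a \<in> carrier S \<Longrightarrow> x \<in> carrier M \<Longrightarrow> a \<odot>\<^bsub>M\<^esub> x \<in> carrier M"
    and left_module_smult_add: "\<And>a x y. a \<in> carrier S \<Longrightarrow> x \<in> carrier M \<Longrightarrow> y \<in> carrier M \<Longrightarrow>
      a \<odot>\<^bsub>M\<^esub> (x \<oplus>\<^bsub>M\<^esub> y) = a \<odot>\<^bsub>M\<^esub> x \<oplus>\<^bsub>M\<^esub> a \<odot>\<^bsub>M\<^esub> y"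
    and left_module_add_smult: "\<And>a b x. a \<in> carrier S \<Longrightarrow> b \<in> carrier S \<Longrightarrow> x \<in> carrier M \<Longrightarrow>
      (a \<oplus>\<^bsub>S\<^esub> b) \<odot>\<^bsub>M\<^esub> x = a \<odot>\<^bsub>M\<^esub> x \<oplus>\<^bsub>M\<^esub> b \<odot>\<^bsub>M\<^esub> x"
    and left_module_smult_assoc: "\<And>a b x. a \<in> carrier S \<Longrightarrow> b \<in> carrier S \<Longrightarrow> x \<in> carrier M \<Longrightarrow>
      (a \<otimes>\<^bsub>S\<^esub> b) \<odot>\<^bsub>M\<^esub> x = a \<odot>\<^bsub>M\<^esub> (b \<odot>\<^bsub>M\<^esub> x)"
  using assms unfolding left_module_def by blast+

lemma
  assumes "h \<in> lmod_hom S M N"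
  shows lmod_hom_carrier: "h \<in> carrier M \<rightarrow> carrier N"
    and lmod_hom_add: "\<And>x y. x \<in> carrier M \<Longrightarrow> y \<in> carrier M \<Longrightarrow> h (x \<oplus>\<^bsub>M\<^esub> y) = h x \<oplus>\<^bsub>N\<^esub> h y"
    and lmod_hom_smult: "\<And>a x. a \<in> carrier S \<Longrightarrow> x \<in> carrier M \<Longrightarrow> h (a \<odot>\<^bsub>M\<^esub> x) = a \<odot>\<^bsub>N\<^esub> h x"
  using assms unfolding lmod_hom_def by blast+

lemma additive_map_finsum:
  assumes M: "abelian_group M" and N: "abelian_group N"
    and g: "g \<in> carrier M \<rightarrow> carrier N"
    and g_add: "\<And>x y. x \<in> carrier M \<Longrightarrow> y \<in> carrier M \<Longrightarrow> g (x \<oplus>\<^bsub>M\<^esub> y) = g x \<oplus>\<^bsub>N\<^esub> g y"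
    and "finite L" "F \<in> L \<rightarrow> carrier M"
  shows "g (finsum M F L) = finsum N (\<lambda>l. g (F l)) L"
proof -
  interpret M: abelian_group M by fact
  interpret N: abelian_group N by fact
  show ?thesis
    using assms(5,6)
  proof (induction L rule: finite_induct)
    case empty
    have g0: "g \<zero>\<^bsub>M\<^esub> \<in> carrier N" using g by auto
    then have "g \<zero>\<^bsub>M\<^esub> \<oplus>\<^bsub>N\<^esub> g \<zero>\<^bsub>M\<^esub> = g \<zero>\<^bsub>M\<^esub> \<oplus>\<^bsub>N\<^esub> \<zero>\<^bsub>N\<^esub>"
      using g_add[of "\<zero>\<^bsub>M\<^esub>" "\<zero>\<^bsub>M\<^esub>"] by simp
    then show ?case using N.add.l_cancel g0 by simp
  next
    case (insert x L)
    then show ?case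
      using g by (simp add: M.finsum_insert N.finsum_insert g_add Pi_def)
  qed
qed

lemma left_module_smult_finsum:
  assumes M: "left_module S M" and s: "s \<in> carrier S"
    and "finite L" "F \<in> L \<rightarrow> carrier M"
  shows "s \<odot>\<^bsub>M\<^esub> finsum M F L = finsum M (\<lambda>l. s \<odot>\<^bsub>M\<^esub> F l) L"
  using additive_map_finsum[OF left_module_abelian_group[OF M] left_module_abelian_group[OF M] _
      left_module_smult_add[OF M s] assms(3,4)] left_module_smult_closed[OF M s]
  by auto

context ring
begin

lemma quot_submodule_simps:
  "carrier (quot_submodule R K J) = {J +> x | x. x \<in> K}"
  "\<zero>\<^bsub>quot_submodule R K J\<^esub> = J"
  "C \<oplus>\<^bsub>quot_submodule R K J\<^esub> D = C <+>\<^bsub>R\<^esub> D"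
  "C \<odot>\<^bsub>quot_submodule R K J\<^esub> D = rcoset_mult R J C D"
  unfolding quot_submodule_def by simp_all

lemma quot_submodule_add_rcos:
  assumes "ideal J R" "x \<in> carrier R" "y \<in> carrier R"
  shows "(J +> x) \<oplus>\<^bsub>quot_submodule R K J\<^esub> (J +> y) = J +> (x \<oplus> y)"
  unfolding quot_submodule_simps using ideal.a_rcos_sum[OF assms] .

lemma quot_submodule_smult_rcos:
  assumes "ideal J R" "a \<in> carrier R" "x \<in> carrier R"
  shows "(J +> a) \<odot>\<^bsub>quot_submodule R K J\<^esub> (J +> x) = J +> (a \<otimes> x)"
  unfolding quot_submodule_simps using ideal.rcoset_mult_add[OF assms] .

lemma quot_submodule_abelian_group:
  assumes J: "ideal J R" and K: "ideal K R"
  shows "abelian_group (quot_submodule R K J)"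
proof -
  interpret K: ideal K R by fact
  have J0: "J +> \<zero> = J"
    using a_rcos_zero[OF J additive_subgroup.zero_closed[OF ideal.axioms(1)[OF J]]] .
  have add: "(J +> x) <+>\<^bsub>R\<^esub> (J +> y) = J +> (x \<oplus> y)" if "x \<in> carrier R" "y \<in> carrier R" for x y
    using ideal.a_rcos_sum[OF J that] .
  have vector: "P" if "C \<in> {J +> x |x. x \<in> K}"
    "\<And>x. x \<in> K \<Longrightarrow> x \<in> carrier R \<Longrightarrow> C = J +> x \<Longrightarrow> P" for C P
    using that K.Icarr by blast
  have rcos_in: "J +> x \<in> {J +> x |x. x \<in> K}" if "x \<in> K" for x
    using that by blast
  show ?thesis
  proof (rule abelian_groupI, unfold quot_submodule_simps)
    fix C D assume "C \<in> {J +> x |x. x \<in> K}" "D \<in> {J +> x |x. x \<in> K}"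
    then show "C <+>\<^bsub>R\<^esub> D \<in> {J +> x |x. x \<in> K}"
      by (elim vector) (simp only: add, intro rcos_in K.a_closed)
  next
    show "J \<in> {J +> x |x. x \<in> K}" using rcos_in[of \<zero>] J0 by simp
  next
    fix C D E assume "C \<in> {J +> x |x. x \<in> K}" "D \<in> {J +> x |x. x \<in> K}" "E \<in> {J +> x |x. x \<in> K}"
    then show "C <+>\<^bsub>R\<^esub> D <+>\<^bsub>R\<^esub> E = C <+>\<^bsub>R\<^esub> (D <+>\<^bsub>R\<^esub> E)"
      by (elim vector) (simp add: add a_assoc)
  next
    fix C D assume "C \<in> {J +> x |x. x \<in> K}" "D \<in> {J +> x |x. x \<in> K}"
    then show "C <+>\<^bsub>R\<^esub> D = D <+>\<^bsub>R\<^esub> C"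
      by (elim vector) (simp add: add a_comm)
  next
    fix C assume "C \<in> {J +> x |x. x \<in> K}"
    then show "J <+>\<^bsub>R\<^esub> C = C"
      by (elim vector) (metis J0 add zero_closed l_zero)
  next
    fix C assume "C \<in> {J +> x |x. x \<in> K}"
    then obtain x where x: "x \<in> K" "x \<in> carrier R" "C = J +> x" by (elim vector)
    then have "(J +> \<ominus> x) <+>\<^bsub>R\<^esub> C = J" using add J0 by (simp add: l_neg)
    then show "\<exists>D\<in>{J +> x |x. x \<in> K}. D <+>\<^bsub>R\<^esub> C = J" using x rcos_in[of "\<ominus> x"] by blast
  qed
qed

lemma quot_submodule_left_module:
  assumes J: "ideal J R" and K: "ideal K R"
  shows "left_module (R Quot J) (quot_submodule R K J)"
proof -
  interpret K: ideal K R by fact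
  have scalar: "P" if "A \<in> carrier (R Quot J)" "\<And>a. a \<in> carrier R \<Longrightarrow> A = J +> a \<Longrightarrow> P" for A P
    using that mem_FactRing_iff[OF J] by blast
  have vector: "P" if "C \<in> carrier (quot_submodule R K J)"
    "\<And>x. x \<in> K \<Longrightarrow> x \<in> carrier R \<Longrightarrow> C = J +> x \<Longrightarrow> P" for C P
    using that K.Icarr unfolding quot_submodule_simps by blast
  note simps = FactRing_add_rcos[OF J] FactRing_mult_rcos[OF J] FactRing_one
    quot_submodule_add_rcos[OF J] quot_submodule_smult_rcos[OF J]
  show ?thesis unfolding left_module_def
  proof (intro conjI ballI)
    show "ring (R Quot J)" using ideal.quotient_is_ring[OF J] .
    show "abelian_group (quot_submodule R K J)" using quot_submodule_abelian_group[OF J K] .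
  next
    fix A C assume "A \<in> carrier (R Quot J)" "C \<in> carrier (quot_submodule R K J)"
    then show "A \<odot>\<^bsub>quot_submodule R K J\<^esub> C \<in> carrier (quot_submodule R K J)"
      by (elim scalar vector) (auto simp: simps quot_submodule_simps(1) intro: K.I_l_closed)
  next
    fix A B C assume "A \<in> carrier (R Quot J)" "B \<in> carrier (R Quot J)"
      "C \<in> carrier (quot_submodule R K J)"
    then show "(A \<oplus>\<^bsub>R Quot J\<^esub> B) \<odot>\<^bsub>quot_submodule R K J\<^esub> C
      = A \<odot>\<^bsub>quot_submodule R K J\<^esub> C \<oplus>\<^bsub>quot_submodule R K J\<^esub> B \<odot>\<^bsub>quot_submodule R K J\<^esub> C"
      by (elim scalar vector) (simp add: simps l_distr)
  next
    fix A C D assume "A \<in> carrier (R Quot J)" "C \<in> carrier (quot_submodule R K J)"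
      "D \<in> carrier (quot_submodule R K J)"
    then show "A \<odot>\<^bsub>quot_submodule R K J\<^esub> (C \<oplus>\<^bsub>quot_submodule R K J\<^esub> D)
      = A \<odot>\<^bsub>quot_submodule R K J\<^esub> C \<oplus>\<^bsub>quot_submodule R K J\<^esub> A \<odot>\<^bsub>quot_submodule R K J\<^esub> D"
      by (elim scalar vector) (simp add: simps r_distr)
  next
    fix A B C assume "A \<in> carrier (R Quot J)" "B \<in> carrier (R Quot J)"
      "C \<in> carrier (quot_submodule R K J)"
    then show "(A \<otimes>\<^bsub>R Quot J\<^esub> B) \<odot>\<^bsub>quot_submodule R K J\<^esub> C
      = A \<odot>\<^bsub>quot_submodule R K J\<^esub> (B \<odot>\<^bsub>quot_submodule R K J\<^esub> C)"
      by (elim scalar vector) (simp add: simps m_assoc)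
  next
    fix C assume "C \<in> carrier (quot_submodule R K J)"
    then show "\<one>\<^bsub>R Quot J\<^esub> \<odot>\<^bsub>quot_submodule R K J\<^esub> C = C"
      by (elim vector) (simp add: simps)
  qed
qed

lemma quot_submodule_finsum:
  assumes J: "ideal J R" and K: "ideal K R" and "finite L" and "\<And>l. l \<in> L \<Longrightarrow> y l \<in> K"
  shows "finsum (quot_submodule R K J) (\<lambda>l. J +> y l) L = J +> finsum R y L"
proof -
  interpret Q: abelian_group "quot_submodule R K J" by (rule quot_submodule_abelian_group[OF J K])
  show ?thesis
    using assms(3,4)
  proof (induction L rule: finite_induct)
    case empty
    show ?case using a_rcos_zero[OF J additive_subgroup.zero_closed[OF ideal.axioms(1)[OF J]]]
      by (simp add: quot_submodule_simps(2))
  next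
    case (insert x L)
    then have y: "y \<in> L \<rightarrow> carrier R" "y x \<in> carrier R" using ideal.Icarr[OF K] by auto
    have "finsum (quot_submodule R K J) (\<lambda>l. J +> y l) (insert x L)
        = (J +> y x) \<oplus>\<^bsub>quot_submodule R K J\<^esub> (J +> finsum R y L)"
      using insert by (subst Q.finsum_insert) (auto simp: quot_submodule_simps(1))
    also have "\<dots> = J +> finsum R y (insert x L)"
      using insert y by (simp add: quot_submodule_add_rcos[OF J] finsum_closed)
    finally show ?case .
  qed
qed

end

locale quotient_dual_basis = ring R for R (structure) +
  fixes J K :: "'a set" and L :: "'l set" and u :: "'l \<Rightarrow> 'a" and \<phi> :: "'l \<Rightarrow> 'a \<Rightarrow> 'a"
  assumes ideal_J: "ideal J R" and ideal_K: "ideal K R" and J_subset_K: "J \<subseteq> K"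
    and finite_L: "finite L"
    and u_in_K: "\<And>l. l \<in> L \<Longrightarrow> u l \<in> K"
    and coord_carrier: "\<And>l x. l \<in> L \<Longrightarrow> x \<in> K \<Longrightarrow> \<phi> l x \<in> carrier R"
    and coord_mult: "\<And>l a x. l \<in> L \<Longrightarrow> a \<in> carrier R \<Longrightarrow> x \<in> K \<Longrightarrow> \<phi> l (a \<otimes> x) = a \<otimes> \<phi> l x"
    and coord_add: "\<And>l x y. l \<in> L \<Longrightarrow> x \<in> K \<Longrightarrow> y \<in> K \<Longrightarrow> \<phi> l (x \<oplus> y) = \<phi> l x \<oplus> \<phi> l y"
    and coord_J: "\<And>l x. l \<in> L \<Longrightarrow> x \<in> J \<Longrightarrow> \<phi> l x \<in> J"
    and dual_basis: "\<And>x. x \<in> K \<Longrightarrow> x \<ominus> (\<Oplus>l\<in>L. \<phi> l x \<otimes> u l) \<in> J"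
begin

abbreviation Q :: "('a set, 'a set) module" where
  "Q \<equiv> quot_submodule R K J"

lemma K_carrier: "x \<in> K \<Longrightarrow> x \<in> carrier R"
  using ideal.Icarr[OF ideal_K] .

lemma rcos_in_quot_submodule: "x \<in> K \<Longrightarrow> J +> x \<in> carrier Q"
  unfolding quot_submodule_simps by blast

lemma coord_rcos_cong:
  assumes "l \<in> L" "x \<in> K" "y \<in> K" "J +> x = J +> y"
  shows "J +> \<phi> l x = J +> \<phi> l y"
proof -
  have c: "x \<in> carrier R" "y \<in> carrier R" using assms K_carrier by auto
  have d: "x \<ominus> y \<in> J" using quotient_eq_iff_same_a_r_cos[OF ideal_J c] assms(4) by blast
  then have dK: "x \<ominus> y \<in> K" using J_subset_K by blast
  have "x = (x \<ominus> y) \<oplus> y" using c by algebra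
  then have "\<phi> l x = \<phi> l (x \<ominus> y) \<oplus> \<phi> l y" using coord_add[OF assms(1) dK assms(3)] by metis
  moreover have "\<phi> l (x \<ominus> y) \<in> J" using coord_J[OF assms(1) d] .
  moreover have "\<phi> l y \<in> carrier R" "\<phi> l (x \<ominus> y) \<in> carrier R"
    using coord_carrier assms dK by auto
  ultimately have "\<phi> l x \<ominus> \<phi> l y \<in> J" by (simp add: a_minus_def a_assoc r_neg)
  then show ?thesis
    using quotient_eq_iff_same_a_r_cos[OF ideal_J] coord_carrier assms by blast
qed

context
  fixes M N :: "('a set, 'z) module" and g f
  assumes M: "left_module (R Quot J) M" and N: "left_module (R Quot J) N"
    and g: "g \<in> lmod_hom (R Quot J) M N" and g_surj: "g ` carrier M = carrier N"
    and f: "f \<in> lmod_hom (R Quot J) Q N"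
begin

definition preimage :: "'l \<Rightarrow> 'z" where
  "preimage l = (SOME z. z \<in> carrier M \<and> g z = f (J +> u l))"

definition lift_rep :: "'a \<Rightarrow> 'z" where
  "lift_rep x = finsum M (\<lambda>l. (J +> \<phi> l x) \<odot>\<^bsub>M\<^esub> preimage l) L"

definition lift :: "'a set \<Rightarrow> 'z" where
  "lift C = lift_rep (SOME x. x \<in> K \<and> C = J +> x)"

lemma preimage: "l \<in> L \<Longrightarrow> preimage l \<in> carrier M \<and> g (preimage l) = f (J +> u l)"
  unfolding preimage_def
proof (rule someI_ex)
  assume "l \<in> L"
  then have "f (J +> u l) \<in> carrier N"
    using funcset_mem[OF lmod_hom_carrier[OF f] rcos_in_quot_submodule[OF u_in_K]] by blast
  then have "f (J +> u l) \<in> g ` carrier M" using g_surj by simp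
  then show "\<exists>z. z \<in> carrier M \<and> g z = f (J +> u l)" by force
qed

lemma coeff_in_FactRing: "l \<in> L \<Longrightarrow> x \<in> K \<Longrightarrow> J +> \<phi> l x \<in> carrier (R Quot J)"
  using mem_FactRing_iff[OF ideal_J] coord_carrier by blast

lemma lift_term_carrier: "l \<in> L \<Longrightarrow> x \<in> K \<Longrightarrow> (J +> \<phi> l x) \<odot>\<^bsub>M\<^esub> preimage l \<in> carrier M"
  using left_module_smult_closed[OF M coeff_in_FactRing] preimage by blast

lemma lift_rep_carrier: "x \<in> K \<Longrightarrow> lift_rep x \<in> carrier M"
proof -
  interpret M: abelian_group M by (rule left_module_abelian_group[OF M])
  show "x \<in> K \<Longrightarrow> lift_rep x \<in> carrier M"
    unfolding lift_rep_def using lift_term_carrier by (intro M.finsum_closed) auto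
qed

lemma lift_rcos: assumes "x \<in> K" shows "lift (J +> x) = lift_rep x"
proof -
  interpret M: abelian_group M by (rule left_module_abelian_group[OF M])
  define y where "y = (SOME y. y \<in> K \<and> J +> x = J +> y)"
  have "y \<in> K \<and> J +> x = J +> y" unfolding y_def by (rule someI_ex) (use assms in blast)
  then have y: "y \<in> K" "J +> x = J +> y" by auto
  have "lift_rep y = lift_rep x"
    unfolding lift_rep_def
      using coord_rcos_cong[OF _ y(1) assms y(2)[symmetric]] lift_term_carrier y assms
    by (intro M.finsum_cong') auto
  then show ?thesis unfolding lift_def y_def by simp
qed

lemma lift_hom: "lift \<in> lmod_hom (R Quot J) Q M"
proof -
  interpret M: abelian_group M by (rule left_module_abelian_group[OF M])
  have vector: "P" if "C \<in> carrier Q" "\<And>x. x \<in> K \<Longrightarrow> C = J +> x \<Longrightarrow> P" for C P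
    using that unfolding quot_submodule_simps by blast
  show ?thesis unfolding lmod_hom_def
  proof (intro CollectI conjI ballI)
    show "lift \<in> carrier Q \<rightarrow> carrier M"
    proof
      fix C assume "C \<in> carrier Q"
      then show "lift C \<in> carrier M" by (elim vector) (simp add: lift_rcos lift_rep_carrier)
    qed
  next
    fix C D assume "C \<in> carrier Q" "D \<in> carrier Q"
    then obtain x y where xy: "x \<in> K" "C = J +> x" "y \<in> K" "D = J +> y" by (elim vector)
    have xy_K: "x \<oplus> y \<in> K"
      using additive_subgroup.a_closed[OF ideal.axioms(1)[OF ideal_K] xy(1,3)] .
    have "lift (C \<oplus>\<^bsub>Q\<^esub> D) = lift_rep (x \<oplus> y)"
      using xy K_carrier quot_submodule_add_rcos[OF ideal_J] lift_rcos[OF xy_K] by simp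
    also have "\<dots> = finsum M (\<lambda>l. (J +> \<phi> l x) \<odot>\<^bsub>M\<^esub> preimage l \<oplus>\<^bsub>M\<^esub> (J +> \<phi> l y) \<odot>\<^bsub>M\<^esub> preimage l) L"
      unfolding lift_rep_def
    proof (intro M.finsum_cong')
      fix l assume l: "l \<in> L"
      have "J +> \<phi> l (x \<oplus> y) = (J +> \<phi> l x) \<oplus>\<^bsub>R Quot J\<^esub> (J +> \<phi> l y)"
        using coord_add[OF l xy(1,3)] FactRing_add_rcos[OF ideal_J] coord_carrier l xy by simp
      then show "(J +> \<phi> l (x \<oplus> y)) \<odot>\<^bsub>M\<^esub> preimage l
          = (J +> \<phi> l x) \<odot>\<^bsub>M\<^esub> preimage l \<oplus>\<^bsub>M\<^esub> (J +> \<phi> l y) \<odot>\<^bsub>M\<^esub> preimage l"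
        using left_module_add_smult[OF M] coeff_in_FactRing l xy preimage by simp
    qed (use lift_term_carrier xy in auto)
    also have "\<dots> = lift_rep x \<oplus>\<^bsub>M\<^esub> lift_rep y"
      unfolding lift_rep_def using lift_term_carrier xy by (intro M.finsum_addf) auto
    finally show "lift (C \<oplus>\<^bsub>Q\<^esub> D) = lift C \<oplus>\<^bsub>M\<^esub> lift D" using lift_rcos xy by simp
  next
    fix A C assume A: "A \<in> carrier (R Quot J)" and "C \<in> carrier Q"
    obtain a where a: "a \<in> carrier R" "A = J +> a" using A mem_FactRing_iff[OF ideal_J] by blast
    obtain x where x: "x \<in> K" "C = J +> x" using \<open>C \<in> carrier Q\<close> by (elim vector)
    have ax_K: "a \<otimes> x \<in> K" using ideal.I_l_closed[OF ideal_K x(1) a(1)] .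
    have "lift (A \<odot>\<^bsub>Q\<^esub> C) = lift_rep (a \<otimes> x)"
      using a x quot_submodule_smult_rcos[OF ideal_J] K_carrier lift_rcos[OF ax_K] by simp
    also have "\<dots> = finsum M (\<lambda>l. A \<odot>\<^bsub>M\<^esub> ((J +> \<phi> l x) \<odot>\<^bsub>M\<^esub> preimage l)) L"
      unfolding lift_rep_def
    proof (intro M.finsum_cong')
      fix l assume l: "l \<in> L"
      have "J +> \<phi> l (a \<otimes> x) = A \<otimes>\<^bsub>R Quot J\<^esub> (J +> \<phi> l x)"
        using coord_mult[OF l a(1) x(1)] FactRing_mult_rcos[OF ideal_J] coord_carrier l a x by simp
      then show "(J +> \<phi> l (a \<otimes> x)) \<odot>\<^bsub>M\<^esub> preimage l = A \<odot>\<^bsub>M\<^esub> ((J +> \<phi> l x) \<odot>\<^bsub>M\<^esub> preimage l)"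
        using left_module_smult_assoc[OF M] A coeff_in_FactRing l x preimage by simp
    qed (use lift_term_carrier x left_module_smult_closed[OF M A] in auto)
    also have "\<dots> = A \<odot>\<^bsub>M\<^esub> lift_rep x"
      unfolding lift_rep_def using lift_term_carrier x
      by (intro left_module_smult_finsum[OF M A finite_L, symmetric]) auto
    finally show "lift (A \<odot>\<^bsub>Q\<^esub> C) = A \<odot>\<^bsub>M\<^esub> lift C" using lift_rcos x by simp
  qed
qed

lemma lift_lifts: assumes "C \<in> carrier Q" shows "g (lift C) = f C"
proof -
  note Mg = left_module_abelian_group[OF M] and Ng = left_module_abelian_group[OF N]
  interpret N: abelian_group N by (rule Ng)
  obtain x where x: "x \<in> K" "C = J +> x" using assms unfolding quot_submodule_simps by blast
  have terms: "\<phi> l x \<otimes> u l \<in> K" if "l \<in> L" for l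
    using ideal.I_l_closed[OF ideal_K u_in_K[OF that] coord_carrier[OF that x(1)]] .
  have "g (lift C) = finsum N (\<lambda>l. g ((J +> \<phi> l x) \<odot>\<^bsub>M\<^esub> preimage l)) L"
    unfolding x(2) lift_rcos[OF x(1)] lift_rep_def using lift_term_carrier x
    by (intro additive_map_finsum[OF Mg Ng lmod_hom_carrier[OF g] lmod_hom_add[OF g] finite_L]) auto
  also have "\<dots> = finsum N (\<lambda>l. f (J +> (\<phi> l x \<otimes> u l))) L"
  proof (intro N.finsum_cong')
    fix l assume l: "l \<in> L"
    have "g ((J +> \<phi> l x) \<odot>\<^bsub>M\<^esub> preimage l) = (J +> \<phi> l x) \<odot>\<^bsub>N\<^esub> f (J +> u l)"
      using lmod_hom_smult[OF g] coeff_in_FactRing preimage l x by simp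
    also have "\<dots> = f ((J +> \<phi> l x) \<odot>\<^bsub>Q\<^esub> (J +> u l))"
      using lmod_hom_smult[OF f] coeff_in_FactRing rcos_in_quot_submodule u_in_K l x by simp
    also have "\<dots> = f (J +> (\<phi> l x \<otimes> u l))"
      using quot_submodule_smult_rcos[OF ideal_J] coord_carrier K_carrier u_in_K l x by simp
    finally show "g ((J +> \<phi> l x) \<odot>\<^bsub>M\<^esub> preimage l) = f (J +> (\<phi> l x \<otimes> u l))" .
  qed (use lmod_hom_carrier[OF f] rcos_in_quot_submodule terms in auto)
  also have "\<dots> = f (finsum Q (\<lambda>l. J +> (\<phi> l x \<otimes> u l)) L)"
    using rcos_in_quot_submodule terms
    by (intro additive_map_finsum[OF quot_submodule_abelian_group[OF ideal_J ideal_K] Ng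
          lmod_hom_carrier[OF f] lmod_hom_add[OF f] finite_L, symmetric]) auto
  also have "\<dots> = f C"
  proof -
    have "(\<Oplus>l\<in>L. \<phi> l x \<otimes> u l) \<in> carrier R" using terms K_carrier by (intro finsum_closed) auto
    then have "J +> (\<Oplus>l\<in>L. \<phi> l x \<otimes> u l) = C"
      using quotient_eq_iff_same_a_r_cos[OF ideal_J] dual_basis[OF x(1)] K_carrier x by simp
    then show ?thesis
      using quot_submodule_finsum[OF ideal_J ideal_K finite_L terms] by simp
  qed
  finally show ?thesis .
qed

end

lemma projective: "projective_lmod TYPE('z) (R Quot J) Q"
  unfolding projective_lmod_def
proof (intro conjI allI impI)
  show "left_module (R Quot J) Q" by (rule quot_submodule_left_module[OF ideal_J ideal_K])
  fix M N :: "('a set, 'z) module" and g f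
  assume "left_module (R Quot J) M \<and> left_module (R Quot J) N \<and> g \<in> lmod_hom (R Quot J) M N \<and>
    g ` carrier M = carrier N \<and> f \<in> lmod_hom (R Quot J) Q N"
  then have M: "left_module (R Quot J) M" and N: "left_module (R Quot J) N"
    and g: "g \<in> lmod_hom (R Quot J) M N" and g_surj: "g ` carrier M = carrier N"
    and f: "f \<in> lmod_hom (R Quot J) Q N" by auto
  show "\<exists>h\<in>lmod_hom (R Quot J) Q M. \<forall>p\<in>carrier Q. g (h p) = f p"
    using lift_hom[OF M N g g_surj f] lift_lifts[OF M N g g_surj f] by blast
qed

end

section \<open>The ring \<open>\<A>(R, I)\<close>\<close>

locale d_system_ring = ring R for R :: "'a ring" (structure) +
  fixes d :: nat and I :: "nat \<Rightarrow> nat \<Rightarrow> 'a set"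
  assumes d_system: "d_system R d I"
begin

lemma
  shows ideal_I: "i \<in> {1..d+1} \<Longrightarrow> j \<in> {1..d+1} \<Longrightarrow> ideal (I i j) R"
    and I_mult_subset:
      "i \<in> {1..d+1} \<Longrightarrow> j \<in> {1..d+1} \<Longrightarrow> k \<in> {1..d+1} \<Longrightarrow> I i j \<cdot> I j k \<subseteq> I i k"
    and I_eq_carrier: "i \<in> {1..d+1} \<Longrightarrow> j \<in> {1..d+1} \<Longrightarrow> j \<le> i \<Longrightarrow> I i j = carrier R"
  using d_system unfolding d_system_def by (simp_all only: atLeastAtMost_iff)

lemma I_mult_closed:
  assumes "i \<in> {1..d+1}" "j \<in> {1..d+1}" "k \<in> {1..d+1}" "x \<in> I i j" "y \<in> I j k"
  shows "x \<otimes> y \<in> I i k"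
  using ideal_prod.prod[OF assms(4,5)] I_mult_subset[OF assms(1-3)] by blast

lemma I_carrier: "i \<in> {1..d+1} \<Longrightarrow> j \<in> {1..d+1} \<Longrightarrow> x \<in> I i j \<Longrightarrow> x \<in> carrier R"
  by (rule ideal.Icarr[OF ideal_I])

lemma zero_in_I: "i \<in> {1..d+1} \<Longrightarrow> j \<in> {1..d+1} \<Longrightarrow> \<zero> \<in> I i j"
  by (rule additive_subgroup.zero_closed[OF ideal.axioms(1)[OF ideal_I]])

lemma I_add_closed:
  "i \<in> {1..d+1} \<Longrightarrow> j \<in> {1..d+1} \<Longrightarrow> x \<in> I i j \<Longrightarrow> y \<in> I i j \<Longrightarrow> x \<oplus> y \<in> I i j"
  by (rule additive_subgroup.a_closed[OF ideal.axioms(1)[OF ideal_I]])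

lemma I_a_inv_closed: "i \<in> {1..d+1} \<Longrightarrow> j \<in> {1..d+1} \<Longrightarrow> x \<in> I i j \<Longrightarrow> \<ominus> x \<in> I i j"
  by (rule additive_subgroup.a_inv_closed[OF ideal.axioms(1)[OF ideal_I]])

lemma I_r_closed:
  "i \<in> {1..d+1} \<Longrightarrow> j \<in> {1..d+1} \<Longrightarrow> x \<in> I i j \<Longrightarrow> y \<in> carrier R \<Longrightarrow> x \<otimes> y \<in> I i j"
  by (rule ideal.I_r_closed[OF ideal_I])

lemma I_antimono:
  assumes "i \<in> {1..d+1}" "k \<in> {1..d+1}" "1 \<le> j" "j \<le> k"
  shows "I i k \<subseteq> I i j"
proof
  fix x assume x: "x \<in> I i k"
  have j: "j \<in> {1..d+1}" using assms by auto
  have "\<one> \<in> I k j" using I_eq_carrier[OF assms(2) j] assms by auto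
  then have "x \<otimes> \<one> \<in> I i j" using I_mult_closed[OF assms(1,2) j x] by blast
  then show "x \<in> I i j" using I_carrier[OF assms(1,2) x] by simp
qed

definition mat_carrier :: "(nat \<Rightarrow> nat \<Rightarrow> 'a) \<Rightarrow> bool" where
  "mat_carrier U \<longleftrightarrow> (\<forall>i j. U i j \<in> carrier R)"

definition I_mat :: "(nat \<Rightarrow> nat \<Rightarrow> 'a) \<Rightarrow> bool" where
  "I_mat U \<longleftrightarrow> mat_carrier U \<and> (\<forall>i\<in>{1..d}. \<forall>j\<in>{1..d}. U i j \<in> I i j)"

definition cls :: "(nat \<Rightarrow> nat \<Rightarrow> 'a) \<Rightarrow> nat \<Rightarrow> nat \<Rightarrow> 'a set" where
  "cls U = (\<lambda>i j. if i \<in> {1..d} \<and> j \<in> {1..d} then I i (d+1) +> U i j else {})"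

definition mat_add :: "(nat \<Rightarrow> nat \<Rightarrow> 'a) \<Rightarrow> (nat \<Rightarrow> nat \<Rightarrow> 'a) \<Rightarrow> nat \<Rightarrow> nat \<Rightarrow> 'a" where
  "mat_add U V = (\<lambda>i j. U i j \<oplus> V i j)"

definition mat_neg :: "(nat \<Rightarrow> nat \<Rightarrow> 'a) \<Rightarrow> nat \<Rightarrow> nat \<Rightarrow> 'a" where
  "mat_neg U = (\<lambda>i j. \<ominus> U i j)"

definition mat_mult :: "(nat \<Rightarrow> nat \<Rightarrow> 'a) \<Rightarrow> (nat \<Rightarrow> nat \<Rightarrow> 'a) \<Rightarrow> nat \<Rightarrow> nat \<Rightarrow> 'a" where
  "mat_mult U V = (\<lambda>i l. \<Oplus>j\<in>{1..d}. U i j \<otimes> V j l)"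

definition mat_zero :: "nat \<Rightarrow> nat \<Rightarrow> 'a" where
  "mat_zero = (\<lambda>i j. \<zero>)"

definition mat_one :: "nat \<Rightarrow> nat \<Rightarrow> 'a" where
  "mat_one = (\<lambda>i j. if i = j then \<one> else \<zero>)"

lemma mat_carrierD: "mat_carrier U \<Longrightarrow> U i j \<in> carrier R"
  by (simp add: mat_carrier_def)

lemma I_mat_carrier: "I_mat U \<Longrightarrow> mat_carrier U"
  by (simp add: I_mat_def)

lemma I_mat_entry_carrier: "I_mat U \<Longrightarrow> U i j \<in> carrier R"
  by (simp add: I_mat_def mat_carrier_def)

lemma I_mat_entry: "I_mat U \<Longrightarrow> i \<in> {1..d} \<Longrightarrow> j \<in> {1..d} \<Longrightarrow> U i j \<in> I i j"
  by (simp add: I_mat_def)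

lemma mat_carrier_add: "mat_carrier U \<Longrightarrow> mat_carrier V \<Longrightarrow> mat_carrier (mat_add U V)"
  unfolding mat_carrier_def mat_add_def by auto

lemma mat_carrier_neg: "mat_carrier U \<Longrightarrow> mat_carrier (mat_neg U)"
  unfolding mat_carrier_def mat_neg_def by auto

lemma mat_carrier_mult: "mat_carrier U \<Longrightarrow> mat_carrier V \<Longrightarrow> mat_carrier (mat_mult U V)"
  unfolding mat_carrier_def mat_mult_def by (auto intro!: finsum_closed)

lemma I_mat_add: "I_mat U \<Longrightarrow> I_mat V \<Longrightarrow> I_mat (mat_add U V)"
  unfolding I_mat_def using mat_carrier_add by (auto simp: mat_add_def intro!: I_add_closed)

lemma I_mat_neg: "I_mat U \<Longrightarrow> I_mat (mat_neg U)"
  unfolding I_mat_def using mat_carrier_neg by (auto simp: mat_neg_def intro!: I_a_inv_closed)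

lemma I_mat_mult:
  assumes "I_mat U" "I_mat V"
  shows "I_mat (mat_mult U V)"
proof -
  have "mat_mult U V i l \<in> I i l" if "i \<in> {1..d}" "l \<in> {1..d}" for i l
    unfolding mat_mult_def
  proof (rule finsum_in_ideal[OF ideal_I])
    fix j assume j: "j \<in> {1..d}"
    show "U i j \<otimes> V j l \<in> I i l"
      using I_mult_closed[of i j l] I_mat_entry[OF assms(1) that(1) j]
        I_mat_entry[OF assms(2) j that(2)]
        that j by auto
  qed (use that in auto)
  then show ?thesis using assms mat_carrier_mult I_mat_carrier unfolding I_mat_def by blast
qed

lemma I_mat_zero: "I_mat mat_zero"
  unfolding I_mat_def mat_carrier_def mat_zero_def by (auto intro!: zero_in_I)

lemma I_mat_one: "I_mat mat_one"
  unfolding I_mat_def mat_carrier_def mat_one_def by (auto simp: I_eq_carrier intro!: zero_in_I)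

lemma mat_mult_assoc:
  assumes "mat_carrier U" "mat_carrier V" "mat_carrier W"
  shows "mat_mult (mat_mult U V) W = mat_mult U (mat_mult V W)"
proof (intro ext)
  fix i l
  have c: "\<And>i j. U i j \<in> carrier R" "\<And>i j. V i j \<in> carrier R" "\<And>i j. W i j \<in> carrier R"
    using assms mat_carrierD by auto
  have "mat_mult (mat_mult U V) W i l = (\<Oplus>k\<in>{1..d}. \<Oplus>j\<in>{1..d}. U i j \<otimes> V j k \<otimes> W k l)"
    unfolding mat_mult_def using c by (intro finsum_cong') (auto simp: finsum_ldistr)
  also have "\<dots> = (\<Oplus>j\<in>{1..d}. \<Oplus>k\<in>{1..d}. U i j \<otimes> V j k \<otimes> W k l)"
    using c by (intro finsum_swap) auto
  also have "\<dots> = mat_mult U (mat_mult V W) i l"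
    unfolding mat_mult_def using c by (intro finsum_cong') (auto simp: finsum_rdistr m_assoc)
  finally show "mat_mult (mat_mult U V) W i l = mat_mult U (mat_mult V W) i l" .
qed

lemma mat_add_mult_distrib:
  "mat_carrier U \<Longrightarrow> mat_carrier V \<Longrightarrow> mat_carrier W \<Longrightarrow>
    mat_mult (mat_add U V) W = mat_add (mat_mult U W) (mat_mult V W)"
  unfolding mat_mult_def mat_add_def mat_carrier_def by (intro ext) (simp add: l_distr finsum_addf)

lemma mat_mult_add_distrib:
  "mat_carrier U \<Longrightarrow> mat_carrier V \<Longrightarrow> mat_carrier W \<Longrightarrow>
    mat_mult W (mat_add U V) = mat_add (mat_mult W U) (mat_mult W V)"
  unfolding mat_mult_def mat_add_def mat_carrier_def by (intro ext) (simp add: r_distr finsum_addf)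

lemma mat_one_mult:
  assumes "mat_carrier U" "i \<in> {1..d}"
  shows "mat_mult mat_one U i l = U i l"
proof -
  have "mat_mult mat_one U i l = (\<Oplus>j\<in>{1..d}. if i = j then U j l else \<zero>)"
    unfolding mat_mult_def mat_one_def using assms mat_carrierD by (intro finsum_cong') auto
  also have "\<dots> = U i l" using assms mat_carrierD by (intro finsum_singleton) auto
  finally show ?thesis .
qed

lemma mat_mult_one:
  assumes "mat_carrier U" "l \<in> {1..d}"
  shows "mat_mult U mat_one i l = U i l"
proof -
  have "mat_mult U mat_one i l = (\<Oplus>j\<in>{1..d}. if l = j then U i j else \<zero>)"
    unfolding mat_mult_def mat_one_def using assms mat_carrierD by (intro finsum_cong') auto
  also have "\<dots> = U i l" using assms mat_carrierD by (intro finsum_singleton) auto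
  finally show ?thesis .
qed

abbreviation Alg :: "(nat \<Rightarrow> nat \<Rightarrow> 'a set) ring" where
  "Alg \<equiv> A_ring R d I"

lemma Alg_simps:
  "carrier Alg = A_carrier R d I" "monoid.mult Alg = A_mult R d I" "monoid.one Alg = A_one R d I"
  "ring.zero Alg = A_zero R d I" "ring.add Alg = A_add R"
  by (simp_all add: A_ring_def)

lemma cls_cong: "(\<And>i j. i \<in> {1..d} \<Longrightarrow> j \<in> {1..d} \<Longrightarrow> U i j = V i j) \<Longrightarrow> cls U = cls V"
  unfolding cls_def by (intro ext) simp

lemma cls_eq_iff:
  assumes "mat_carrier U" "mat_carrier V"
  shows "cls U = cls V \<longleftrightarrow> (\<forall>i\<in>{1..d}. \<forall>j\<in>{1..d}. U i j \<ominus> V i j \<in> I i (d+1))"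
proof
  assume h: "cls U = cls V"
  show "\<forall>i\<in>{1..d}. \<forall>j\<in>{1..d}. U i j \<ominus> V i j \<in> I i (d+1)"
  proof (intro ballI)
    fix i j assume ij: "i \<in> {1..d}" "j \<in> {1..d}"
    have "I i (d+1) +> U i j = I i (d+1) +> V i j"
      using fun_cong[OF fun_cong[OF h, of i], of j] ij unfolding cls_def by simp
    then show "U i j \<ominus> V i j \<in> I i (d+1)"
      using quotient_eq_iff_same_a_r_cos[OF ideal_I] ij assms mat_carrierD by auto
  qed
next
  assume "\<forall>i\<in>{1..d}. \<forall>j\<in>{1..d}. U i j \<ominus> V i j \<in> I i (d+1)"
  then show "cls U = cls V"
    unfolding cls_def using quotient_eq_iff_same_a_r_cos[OF ideal_I] assms mat_carrierD
    by (intro ext) auto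
qed

lemma A_carrier_eq: "A_carrier R d I = cls ` {U. I_mat U}"
proof
  show "cls ` {U. I_mat U} \<subseteq> A_carrier R d I"
    unfolding A_carrier_def cls_def using I_mat_entry by auto
next
  show "A_carrier R d I \<subseteq> cls ` {U. I_mat U}"
  proof
    fix a assume a: "a \<in> A_carrier R d I"
    let ?P = "\<lambda>i j x. x \<in> I i j \<and> a i j = I i (d+1) +> x"
    define U where "U i j = (if i \<in> {1..d} \<and> j \<in> {1..d} then SOME x. ?P i j x else \<zero>)" for i j
    have U: "?P i j (U i j)" if "i \<in> {1..d}" "j \<in> {1..d}" for i j
    proof -
      have "\<exists>x. ?P i j x" using a that unfolding A_carrier_def by blast
      then show ?thesis using someI_ex[of "?P i j"] that unfolding U_def by simp
    qed
    have "I_mat U" unfolding I_mat_def mat_carrier_def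
    proof (intro conjI allI ballI)
      fix i j show "U i j \<in> carrier R"
        using U I_carrier[of i j] by (cases "i \<in> {1..d} \<and> j \<in> {1..d}") (auto simp: U_def)
    qed (use U in auto)
    moreover have "a = cls U"
      unfolding cls_def using U a unfolding A_carrier_def by (intro ext) auto
    ultimately show "a \<in> cls ` {U. I_mat U}" by blast
  qed
qed

lemma cls_in_carrier: "I_mat U \<Longrightarrow> cls U \<in> carrier Alg"
  using A_carrier_eq Alg_simps by auto

lemma A_carrierE:
  assumes "a \<in> carrier Alg"
  obtains U where "I_mat U" "a = cls U"
  using assms A_carrier_eq Alg_simps by auto

lemma A_add_cls: "mat_carrier U \<Longrightarrow> mat_carrier V \<Longrightarrow> A_add R (cls U) (cls V) = cls (mat_add U V)"
  unfolding A_add_def cls_def mat_add_def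
  using mat_carrierD ideal.a_rcos_sum[OF ideal_I] set_add_empty by (intro ext) auto

lemma A_zero_eq: "A_zero R d I = cls mat_zero"
  unfolding A_zero_def cls_def mat_zero_def using a_rcos_zero[OF ideal_I zero_in_I]
    by (intro ext) auto

lemma A_one_eq: "A_one R d I = cls mat_one"
  unfolding A_one_def cls_def mat_one_def using a_rcos_zero[OF ideal_I zero_in_I]
    by (intro ext) auto

lemma A_mult_entry_mem:
  assumes U: "I_mat U" and V: "I_mat V" and il: "i \<in> {1..d}" "l \<in> {1..d}"
    and xy: "\<forall>j\<in>{1..d}. x j \<in> cls U i j \<and> y j \<in> cls V j l"
  shows "(\<Oplus>j\<in>{1..d}. x j \<otimes> y j) \<in> I i (d+1) +> mat_mult U V i l"
  unfolding mat_mult_def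
proof (rule finsum_mem_a_rcos[OF ideal_I])
  fix j assume j: "j \<in> {1..d}"
  have i1: "i \<in> {1..d+1}" "d+1 \<in> {1..d+1}" "j \<in> {1..d+1}" "l \<in> {1..d+1}" using il j by auto
  have xj: "x j \<in> I i (d+1) +> U i j" and yj: "y j \<in> I j (d+1) +> V j l"
    using xy j il unfolding cls_def by auto
  have Uc: "U i j \<in> carrier R" "V j l \<in> carrier R" using U V I_mat_entry_carrier by auto
  have xc: "x j \<in> carrier R" using mem_a_rcos_carrier[OF ideal_I[OF i1(1,2)] Uc(1) xj] .
  have yc: "y j \<in> carrier R" using mem_a_rcos_carrier[OF ideal_I[OF i1(3,2)] Uc(2) yj] .
  have dx: "x j \<ominus> U i j \<in> I i (d+1)" using xj mem_a_rcos_iff[OF ideal_I[OF i1(1,2)] xc Uc(1)]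
    by simp
  have dy: "y j \<ominus> V j l \<in> I j (d+1)" using yj mem_a_rcos_iff[OF ideal_I[OF i1(3,2)] yc Uc(2)]
    by simp
  have "(x j \<ominus> U i j) \<otimes> y j \<in> I i (d+1)" using I_r_closed[OF i1(1,2) dx yc] .
  moreover have "U i j \<otimes> (y j \<ominus> V j l) \<in> I i (d+1)"
    using I_mult_closed[OF i1(1,3,2) I_mat_entry[OF U il(1) j] dy] .
  ultimately have "(x j \<ominus> U i j) \<otimes> y j \<oplus> U i j \<otimes> (y j \<ominus> V j l) \<in> I i (d+1)"
    using I_add_closed[OF i1(1,2)] by blast
  moreover have "(x j \<ominus> U i j) \<otimes> y j \<oplus> U i j \<otimes> (y j \<ominus> V j l) = x j \<otimes> y j \<ominus> U i j \<otimes> V j l"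
    using xc yc Uc by algebra
  ultimately show "x j \<otimes> y j \<in> I i (d+1) +> U i j \<otimes> V j l"
    using mem_a_rcos_iff[OF ideal_I[OF i1(1,2)]] xc yc Uc by simp
  show "x j \<otimes> y j \<in> carrier R" "U i j \<otimes> V j l \<in> carrier R" using xc yc Uc by simp_all
qed (use il in auto)

lemma A_mult_cls:
  assumes U: "I_mat U" and V: "I_mat V"
  shows "A_mult R d I (cls U) (cls V) = cls (mat_mult U V)"
proof (intro ext)
  fix i l
  show "A_mult R d I (cls U) (cls V) i l = cls (mat_mult U V) i l"
  proof (cases "i \<in> {1..d} \<and> l \<in> {1..d}")
    case False
    then show ?thesis unfolding A_mult_def cls_def by auto
  next
    case True
    let ?C = "I i (d+1) +> mat_mult U V i l"
    let ?S = "{I i (d+1) +> (\<Oplus>j\<in>{1..d}. x j \<otimes> y j) | x y.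
                \<forall>j\<in>{1..d}. x j \<in> cls U i j \<and> y j \<in> cls V j l}"
    have i1: "i \<in> {1..d+1}" "d+1 \<in> {1..d+1}" using True by auto
    have C: "mat_mult U V i l \<in> carrier R"
      using mat_carrier_mult U V I_mat_carrier mat_carrierD by blast
    have "?S \<subseteq> {?C}"
    proof
      fix z assume "z \<in> ?S"
      then obtain x y where xy: "\<forall>j\<in>{1..d}. x j \<in> cls U i j \<and> y j \<in> cls V j l"
        and z: "z = I i (d+1) +> (\<Oplus>j\<in>{1..d}. x j \<otimes> y j)" by blast
      have "?C = z"
        unfolding z using A_mult_entry_mem[OF U V _ _ xy] True C
          abelian_subgroup.a_repr_independence'[OF abelian_subgroupI3[OF
            ideal.axioms(1)[OF ideal_I[OF i1]] is_abelian_group]]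
        by blast
      then show "z \<in> {?C}" by simp
    qed
    moreover have "?C \<in> ?S"
    proof -
      have self: "U i j \<in> cls U i j" "V j l \<in> cls V j l" if "j \<in> {1..d}" for j
        using True that mem_a_rcos_iff[OF ideal_I] U V I_mat_entry_carrier zero_in_I
        unfolding cls_def by (simp_all add: r_neg minus_eq)
      show ?thesis
        unfolding mat_mult_def
        by (rule CollectI, rule exI[of _ "\<lambda>j. U i j"], rule exI[of _ "\<lambda>j. V j l"]) (simp add: self)
    qed
    ultimately have "?S = {?C}" by blast
    then show ?thesis unfolding A_mult_def cls_def using True by simp
  qed
qed

lemma Alg_add_cls: "I_mat U \<Longrightarrow> I_mat V \<Longrightarrow> cls U \<oplus>\<^bsub>Alg\<^esub> cls V = cls (mat_add U V)"
  by (simp add: Alg_simps A_add_cls I_mat_carrier)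

lemma Alg_mult_cls: "I_mat U \<Longrightarrow> I_mat V \<Longrightarrow> cls U \<otimes>\<^bsub>Alg\<^esub> cls V = cls (mat_mult U V)"
  by (simp add: Alg_simps A_mult_cls)

lemma Alg_zero: "\<zero>\<^bsub>Alg\<^esub> = cls mat_zero"
  by (simp add: Alg_simps A_zero_eq)

lemma Alg_one: "\<one>\<^bsub>Alg\<^esub> = cls mat_one"
  by (simp add: Alg_simps A_one_eq)

lemma A_ring_is_ring: "ring Alg"
proof (rule ringI)
  show "abelian_group Alg"
  proof (rule abelian_groupI)
    fix x y assume "x \<in> carrier Alg" "y \<in> carrier Alg"
    then obtain U V where "I_mat U" "x = cls U" "I_mat V" "y = cls V" by (metis A_carrierE)
    then show "x \<oplus>\<^bsub>Alg\<^esub> y \<in> carrier Alg" by (simp add: Alg_add_cls I_mat_add cls_in_carrier)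
  next
    show "\<zero>\<^bsub>Alg\<^esub> \<in> carrier Alg" by (simp add: Alg_zero I_mat_zero cls_in_carrier)
  next
    fix x y z assume "x \<in> carrier Alg" "y \<in> carrier Alg" "z \<in> carrier Alg"
    then obtain U V W where "I_mat U" "x = cls U" "I_mat V" "y = cls V" "I_mat W" "z = cls W"
      by (metis A_carrierE)
    then show "x \<oplus>\<^bsub>Alg\<^esub> y \<oplus>\<^bsub>Alg\<^esub> z = x \<oplus>\<^bsub>Alg\<^esub> (y \<oplus>\<^bsub>Alg\<^esub> z)"
      by (simp add: Alg_add_cls I_mat_add) (simp add: mat_add_def I_mat_entry_carrier a_assoc)
  next
    fix x y assume "x \<in> carrier Alg" "y \<in> carrier Alg"
    then obtain U V where "I_mat U" "x = cls U" "I_mat V" "y = cls V" by (metis A_carrierE)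
    then show "x \<oplus>\<^bsub>Alg\<^esub> y = y \<oplus>\<^bsub>Alg\<^esub> x"
      by (simp add: Alg_add_cls I_mat_add) (simp add: mat_add_def I_mat_entry_carrier a_comm)
  next
    fix x assume "x \<in> carrier Alg"
    then obtain U where "I_mat U" "x = cls U" by (metis A_carrierE)
    then show "\<zero>\<^bsub>Alg\<^esub> \<oplus>\<^bsub>Alg\<^esub> x = x"
      by (simp add: Alg_add_cls Alg_zero I_mat_zero)
        (simp add: mat_add_def mat_zero_def I_mat_entry_carrier)
  next
    fix x assume "x \<in> carrier Alg"
    then obtain U where U: "I_mat U" "x = cls U" by (metis A_carrierE)
    then have "cls (mat_neg U) \<oplus>\<^bsub>Alg\<^esub> x = \<zero>\<^bsub>Alg\<^esub>"
      by (simp add: Alg_add_cls Alg_zero I_mat_neg)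
        (simp add: mat_add_def mat_zero_def mat_neg_def I_mat_entry_carrier l_neg)
    moreover have "cls (mat_neg U) \<in> carrier Alg" using U by (simp add: I_mat_neg cls_in_carrier)
    ultimately show "\<exists>y\<in>carrier Alg. y \<oplus>\<^bsub>Alg\<^esub> x = \<zero>\<^bsub>Alg\<^esub>" by blast
  qed
next
  show "monoid Alg"
  proof (rule monoidI)
    fix x y assume "x \<in> carrier Alg" "y \<in> carrier Alg"
    then obtain U V where "I_mat U" "x = cls U" "I_mat V" "y = cls V" by (metis A_carrierE)
    then show "x \<otimes>\<^bsub>Alg\<^esub> y \<in> carrier Alg" by (simp add: Alg_mult_cls I_mat_mult cls_in_carrier)
  next
    show "\<one>\<^bsub>Alg\<^esub> \<in> carrier Alg" by (simp add: Alg_one I_mat_one cls_in_carrier)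
  next
    fix x y z assume "x \<in> carrier Alg" "y \<in> carrier Alg" "z \<in> carrier Alg"
    then obtain U V W where "I_mat U" "x = cls U" "I_mat V" "y = cls V" "I_mat W" "z = cls W"
      by (metis A_carrierE)
    then show "x \<otimes>\<^bsub>Alg\<^esub> y \<otimes>\<^bsub>Alg\<^esub> z = x \<otimes>\<^bsub>Alg\<^esub> (y \<otimes>\<^bsub>Alg\<^esub> z)"
      by (simp add: Alg_mult_cls I_mat_mult mat_mult_assoc I_mat_carrier)
  next
    fix x assume "x \<in> carrier Alg"
    then obtain U where "I_mat U" "x = cls U" by (metis A_carrierE)
    then show "\<one>\<^bsub>Alg\<^esub> \<otimes>\<^bsub>Alg\<^esub> x = x"
      by (simp add: Alg_mult_cls Alg_one I_mat_one) (intro cls_cong mat_one_mult I_mat_carrier)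
  next
    fix x assume "x \<in> carrier Alg"
    then obtain U where "I_mat U" "x = cls U" by (metis A_carrierE)
    then show "x \<otimes>\<^bsub>Alg\<^esub> \<one>\<^bsub>Alg\<^esub> = x"
      by (simp add: Alg_mult_cls Alg_one I_mat_one) (intro cls_cong mat_mult_one I_mat_carrier)
  qed
next
  fix x y z assume "x \<in> carrier Alg" "y \<in> carrier Alg" "z \<in> carrier Alg"
  then obtain U V W where "I_mat U" "x = cls U" "I_mat V" "y = cls V" "I_mat W" "z = cls W"
    by (metis A_carrierE)
  then show "(x \<oplus>\<^bsub>Alg\<^esub> y) \<otimes>\<^bsub>Alg\<^esub> z = x \<otimes>\<^bsub>Alg\<^esub> z \<oplus>\<^bsub>Alg\<^esub> y \<otimes>\<^bsub>Alg\<^esub> z"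
    and "z \<otimes>\<^bsub>Alg\<^esub> (x \<oplus>\<^bsub>Alg\<^esub> y) = z \<otimes>\<^bsub>Alg\<^esub> x \<oplus>\<^bsub>Alg\<^esub> z \<otimes>\<^bsub>Alg\<^esub> y"
    by (simp_all add: Alg_mult_cls Alg_add_cls I_mat_mult I_mat_add mat_add_mult_distrib
        mat_mult_add_distrib I_mat_carrier)
qed

end

sublocale d_system_ring \<subseteq> A: ring "A_ring R d I"
  by (rule A_ring_is_ring)

context d_system_ring
begin

lemma Alg_a_inv_cls: "I_mat U \<Longrightarrow> \<ominus>\<^bsub>Alg\<^esub> cls U = cls (mat_neg U)"
  by (rule A.minus_equality)
    (simp_all add: Alg_add_cls Alg_zero I_mat_neg cls_in_carrier,
      simp add: mat_add_def mat_zero_def mat_neg_def I_mat_entry_carrier l_neg)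

lemma Alg_minus_cls: "I_mat U \<Longrightarrow> I_mat V \<Longrightarrow> cls U \<ominus>\<^bsub>Alg\<^esub> cls V = cls (mat_add U (mat_neg V))"
  by (simp add: a_minus_def Alg_a_inv_cls Alg_add_cls I_mat_neg)

lemma I_mat_finsum:
  assumes "finite K" "\<And>k. k \<in> K \<Longrightarrow> I_mat (Us k)"
  shows "I_mat (\<lambda>i l. \<Oplus>k\<in>K. Us k i l)"
proof -
  have "(\<Oplus>k\<in>K. Us k i l) \<in> carrier R" for i l
    using assms I_mat_entry_carrier by (intro finsum_closed) (auto simp: Pi_def)
  moreover have "(\<Oplus>k\<in>K. Us k i l) \<in> I i l" if "i \<in> {1..d}" "l \<in> {1..d}" for i l
    by (rule finsum_in_ideal[OF ideal_I]) (use that assms I_mat_entry in auto)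
  ultimately show ?thesis unfolding I_mat_def mat_carrier_def by blast
qed

lemma Alg_finsum_cls:
  assumes "finite K" "\<And>k. k \<in> K \<Longrightarrow> I_mat (Us k)"
  shows "finsum Alg (\<lambda>k. cls (Us k)) K = cls (\<lambda>i l. \<Oplus>k\<in>K. Us k i l)"
  using assms
proof (induction K rule: finite_induct)
  case empty
  then show ?case by (simp add: Alg_zero mat_zero_def)
next
  case (insert x F)
  have "finsum Alg (\<lambda>k. cls (Us k)) (insert x F)
      = cls (Us x) \<oplus>\<^bsub>Alg\<^esub> cls (\<lambda>i l. \<Oplus>k\<in>F. Us k i l)"
    using insert by (subst A.finsum_insert) (auto intro: cls_in_carrier)
  also have "\<dots> = cls (mat_add (Us x) (\<lambda>i l. \<Oplus>k\<in>F. Us k i l))"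
    using insert by (intro Alg_add_cls I_mat_finsum) auto
  also have "\<dots> = cls (\<lambda>i l. \<Oplus>k\<in>insert x F. Us k i l)"
    unfolding mat_add_def using insert
    by (intro arg_cong[where f=cls] ext) (simp add: I_mat_entry_carrier Pi_def)
  finally show ?case .
qed

definition rep :: "(nat \<Rightarrow> nat \<Rightarrow> 'a set) \<Rightarrow> nat \<Rightarrow> nat \<Rightarrow> 'a" where
  "rep a = (SOME U. I_mat U \<and> a = cls U)"

lemma rep:
  assumes "a \<in> carrier Alg"
  shows "I_mat (rep a) \<and> a = cls (rep a)"
proof -
  obtain U where "I_mat U" "a = cls U" using A_carrierE[OF assms] .
  then have "\<exists>U. I_mat U \<and> a = cls U" by blast
  then show ?thesis unfolding rep_def by (rule someI_ex)
qed

definition mat_unit :: "nat \<Rightarrow> nat \<Rightarrow> 'a \<Rightarrow> nat \<Rightarrow> nat \<Rightarrow> 'a" where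
  "mat_unit a b x = (\<lambda>i j. if i = a \<and> j = b then x else \<zero>)"

definition mat_f :: "nat \<Rightarrow> nat \<Rightarrow> nat \<Rightarrow> 'a" where
  "mat_f j = (\<lambda>a b. if a = b \<and> j < a then \<one> else \<zero>)"

lemma mat_carrier_unit: "x \<in> carrier R \<Longrightarrow> mat_carrier (mat_unit a b x)"
  unfolding mat_carrier_def mat_unit_def by auto

lemma mat_carrier_f: "mat_carrier (mat_f j)"
  unfolding mat_carrier_def mat_f_def by auto

lemma I_mat_unit: "x \<in> I a b \<Longrightarrow> a \<in> {1..d+1} \<Longrightarrow> b \<in> {1..d+1} \<Longrightarrow> I_mat (mat_unit a b x)"
  unfolding I_mat_def mat_carrier_def mat_unit_def using zero_in_I I_carrier by auto

lemma I_mat_f: "I_mat (mat_f j)"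
  unfolding I_mat_def mat_carrier_def mat_f_def using zero_in_I I_eq_carrier by auto

lemma mat_unit_mult:
  assumes "mat_carrier V" "x \<in> carrier R"
  shows "mat_mult (mat_unit a b x) V i l = (if i = a \<and> b \<in> {1..d} then x \<otimes> V b l else \<zero>)"
proof -
  have "mat_mult (mat_unit a b x) V i l
      = (\<Oplus>m\<in>{1..d}. if b = m then (if i = a then x \<otimes> V m l else \<zero>) else \<zero>)"
    unfolding mat_mult_def mat_unit_def using assms mat_carrierD by (intro finsum_cong') auto
  also have "\<dots> = (if i = a \<and> b \<in> {1..d} then x \<otimes> V b l else \<zero>)"
    using assms mat_carrierD by (subst finsum_if_eq) auto
  finally show ?thesis .
qed

lemma mat_mult_unit:
  assumes "mat_carrier V" "x \<in> carrier R"
  shows "mat_mult V (mat_unit a b x) i l = (if l = b \<and> a \<in> {1..d} then V i a \<otimes> x else \<zero>)"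
proof -
  have "mat_mult V (mat_unit a b x) i l
      = (\<Oplus>m\<in>{1..d}. if a = m then (if l = b then V i m \<otimes> x else \<zero>) else \<zero>)"
    unfolding mat_mult_def mat_unit_def using assms mat_carrierD by (intro finsum_cong') auto
  also have "\<dots> = (if l = b \<and> a \<in> {1..d} then V i a \<otimes> x else \<zero>)"
    using assms mat_carrierD by (subst finsum_if_eq) auto
  finally show ?thesis .
qed

lemma mat_unit_mult_unit:
  "x \<in> carrier R \<Longrightarrow> y \<in> carrier R \<Longrightarrow> b \<in> {1..d} \<Longrightarrow>
    mat_mult (mat_unit a b x) (mat_unit b e y) = mat_unit a e (x \<otimes> y)"
  by (intro ext) (simp add: mat_unit_mult mat_carrier_unit, simp add: mat_unit_def)

lemma mat_f_mult_unit:
  "x \<in> carrier R \<Longrightarrow> a \<in> {1..d} \<Longrightarrow> j < a \<Longrightarrow> mat_mult (mat_f j) (mat_unit a b x) = mat_unit a b x"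
  by (intro ext) (simp add: mat_mult_unit mat_carrier_f, simp add: mat_unit_def mat_f_def)

lemma mat_unit_mult_f:
  "x \<in> carrier R \<Longrightarrow> b \<in> {1..d} \<Longrightarrow> j < b \<Longrightarrow> mat_mult (mat_unit a b x) (mat_f j) = mat_unit a b x"
  by (intro ext) (simp add: mat_unit_mult mat_carrier_f, simp add: mat_unit_def mat_f_def)

lemma A_e_cls: "k \<in> {1..d} \<Longrightarrow> A_e R d I k = cls (mat_unit k k \<one>)"
  unfolding A_e_def cls_def mat_unit_def A_zero_def using a_rcos_zero[OF ideal_I zero_in_I]
  by (intro ext) auto

lemma A_f_cls: "A_f R d I j = cls (mat_f j)"
proof -
  have "A_f R d I j = finsum Alg (\<lambda>k. cls (mat_unit k k \<one>)) {j<..d}"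
    unfolding A_f_def using A_e_cls
    by (intro A.finsum_cong') (auto intro!: cls_in_carrier I_mat_unit simp: I_eq_carrier)
  also have "\<dots> = cls (\<lambda>i l. \<Oplus>k\<in>{j<..d}. mat_unit k k \<one> i l)"
    by (rule Alg_finsum_cls) (auto intro!: I_mat_unit simp: I_eq_carrier)
  also have "\<dots> = cls (mat_f j)"
    by (rule cls_cong) (simp add: mat_unit_def mat_f_def finsum_diag)
  finally show ?thesis .
qed

lemma A_f_carrier: "A_f R d I j \<in> carrier Alg"
  unfolding A_f_cls using I_mat_f cls_in_carrier by blast

lemma A_f_idem: "A_f R d I j \<otimes>\<^bsub>Alg\<^esub> A_f R d I j = A_f R d I j"
proof -
  have "mat_mult (mat_f j) (mat_f j) i l = mat_f j i l" if "i \<in> {1..d}" for i l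
  proof -
    have "mat_mult (mat_f j) (mat_f j) i l
        = (\<Oplus>m\<in>{1..d}. if i = m then (if m = l \<and> j < m then \<one> else \<zero>) else \<zero>)"
      unfolding mat_mult_def mat_f_def by (intro finsum_cong') auto
    also have "\<dots> = mat_f j i l"
      using finsum_singleton[of i "{1..d}" "\<lambda>m. if m = l \<and> j < m then \<one> else \<zero>"] that
      by (auto simp: Pi_def mat_f_def)
    finally show ?thesis .
  qed
  then have "cls (mat_mult (mat_f j) (mat_f j)) = cls (mat_f j)" by (rule cls_cong)
  then show ?thesis unfolding A_f_cls using Alg_mult_cls[OF I_mat_f I_mat_f] by simp
qed

lemma ideal_A_J: "ideal (A_J R d I j) Alg"
  unfolding A_J_def using A_f_carrier by (intro A.genideal_ideal) auto

lemma A_f_in_A_J: "A_f R d I j \<in> A_J R d I j"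
  unfolding A_J_def using A_f_carrier by (intro A.genideal_self') auto

lemma A_J_idempotent: "A_J R d I j \<cdot>\<^bsub>Alg\<^esub> A_J R d I j = A_J R d I j"
  unfolding A_J_def by (rule A.genideal_idem_prod[OF A_f_carrier A_f_idem])

section \<open>An explicit description of \<open>J\<^sub>j\<close>\<close>

definition J_cond :: "nat \<Rightarrow> (nat \<Rightarrow> nat \<Rightarrow> 'a) \<Rightarrow> bool" where
  "J_cond j U \<longleftrightarrow> (\<forall>a\<in>{1..j}. \<forall>b\<in>{1..j}. U a b \<in> I a (j+1))"

definition J_explicit :: "nat \<Rightarrow> (nat \<Rightarrow> nat \<Rightarrow> 'a set) set" where
  "J_explicit j = {cls U | U. I_mat U \<and> J_cond j U}"

lemma J_explicit_J_cond:
  assumes j: "j \<le> d" and U: "I_mat U" and m: "cls U \<in> J_explicit j"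
  shows "J_cond j U"
  unfolding J_cond_def
proof (intro ballI)
  fix a b assume a: "a \<in> {1..j}" and b: "b \<in> {1..j}"
  obtain V where V: "I_mat V" "J_cond j V" "cls U = cls V" using m unfolding J_explicit_def by blast
  have a1: "a \<in> {1..d+1}" "j+1 \<in> {1..d+1}" using a j by auto
  have "U a b \<ominus> V a b \<in> I a (j+1)"
    using V(3) cls_eq_iff U V(1) I_mat_carrier a b j I_antimono[of a "d+1" "j+1"] by auto
  moreover have "V a b \<in> I a (j+1)" using V(2) a b unfolding J_cond_def by blast
  moreover have "U a b = (U a b \<ominus> V a b) \<oplus> V a b"
    using U V(1) I_mat_entry_carrier[of U a b] I_mat_entry_carrier[of V a b] by algebra
  ultimately show "U a b \<in> I a (j+1)" using I_add_closed[OF a1] by metis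
qed

lemma J_cond_row:
  assumes "j \<le> d" "J_cond j U" "I_mat U" "a \<in> {1..j}" "m \<in> {1..d}"
  shows "U a m \<in> I a (j+1)"
proof (cases "m \<le> j")
  case True
  then show ?thesis using assms unfolding J_cond_def by auto
next
  case False
  have "U a m \<in> I a m" using assms I_mat_entry by auto
  then show ?thesis using I_antimono[of a m "j+1"] assms False by auto
qed

lemma J_cond_mult_left:
  assumes j: "j \<le> d" and W: "I_mat W" and U: "I_mat U" "J_cond j U"
  shows "J_cond j (mat_mult W U)"
  unfolding J_cond_def
proof (intro ballI)
  fix a b assume a: "a \<in> {1..j}" and b: "b \<in> {1..j}"
  show "mat_mult W U a b \<in> I a (j+1)" unfolding mat_mult_def
  proof (rule finsum_in_ideal[OF ideal_I])
    fix m assume m: "m \<in> {1..d}"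
    have W_am: "W a m \<in> I a m" using W I_mat_entry a m j by auto
    show "W a m \<otimes> U m b \<in> I a (j+1)"
    proof (cases "m \<le> j")
      case True
      then have "U m b \<in> I m (j+1)" using U m b unfolding J_cond_def by auto
      then show ?thesis using W_am I_mult_closed[of a m "j+1"] a m j by auto
    next
      case False
      then have "W a m \<in> I a (j+1)" using W_am I_antimono[of a m "j+1"] a m j by auto
      then show ?thesis using I_r_closed[of a "j+1"] a j U I_mat_entry_carrier by auto
    qed
  qed (use a j in auto)
qed

lemma J_cond_mult_right:
  assumes j: "j \<le> d" and W: "I_mat W" and U: "I_mat U" "J_cond j U"
  shows "J_cond j (mat_mult U W)"
  unfolding J_cond_def
proof (intro ballI)
  fix a b assume a: "a \<in> {1..j}" and b: "b \<in> {1..j}"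
  show "mat_mult U W a b \<in> I a (j+1)" unfolding mat_mult_def
  proof (rule finsum_in_ideal[OF ideal_I])
    fix m assume m: "m \<in> {1..d}"
    have "U a m \<in> I a (j+1)" using J_cond_row[OF j U(2,1) a m] .
    then show "U a m \<otimes> W m b \<in> I a (j+1)" using I_r_closed[of a "j+1"] a j W I_mat_entry_carrier
      by auto
  qed (use a j in auto)
qed

lemma ideal_J_explicit:
  assumes j: "j \<le> d"
  shows "ideal (J_explicit j) Alg"
proof (rule idealI)
  show "ring Alg" by (rule A_ring_is_ring)
  show "subgroup (J_explicit j) (add_monoid Alg)"
  proof (rule A.add.subgroupI, goal_cases)
    case 1
    show ?case unfolding J_explicit_def using cls_in_carrier by auto
  next
    case 2
    have "cls mat_zero \<in> J_explicit j"
      unfolding J_explicit_def J_cond_def using I_mat_zero j zero_in_I by (auto simp: mat_zero_def)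
    then show ?case by blast
  next
    case (3 a)
    then obtain U where U: "I_mat U" "J_cond j U" "a = cls U" unfolding J_explicit_def by blast
    have "J_cond j (mat_neg U)" using U j I_a_inv_closed unfolding J_cond_def mat_neg_def by auto
    then have "\<ominus>\<^bsub>Alg\<^esub> a \<in> J_explicit j"
      using U I_mat_neg Alg_a_inv_cls unfolding J_explicit_def by auto
    then show ?case by (simp add: a_inv_def)
  next
    case (4 a b)
    then obtain U V where U: "I_mat U" "J_cond j U" "a = cls U" and V: "I_mat V" "J_cond j V"
        "b = cls V"
      unfolding J_explicit_def by blast
    have "J_cond j (mat_add U V)" using U V j I_add_closed unfolding J_cond_def mat_add_def by auto
    then show ?case using U V I_mat_add Alg_add_cls unfolding J_explicit_def by auto
  qed
next
  fix a x assume a: "a \<in> J_explicit j" and x: "x \<in> carrier Alg"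
  obtain U where U: "I_mat U" "J_cond j U" "a = cls U" using a unfolding J_explicit_def by blast
  obtain W where W: "I_mat W" "x = cls W" using x by (rule A_carrierE)
  show "x \<otimes>\<^bsub>Alg\<^esub> a \<in> J_explicit j"
    using U W Alg_mult_cls J_cond_mult_left[OF j W(1) U(1,2)] I_mat_mult[OF W(1) U(1)]
    unfolding J_explicit_def by auto
  show "a \<otimes>\<^bsub>Alg\<^esub> x \<in> J_explicit j"
    using U W Alg_mult_cls J_cond_mult_right[OF j W(1) U(1,2)] I_mat_mult[OF U(1) W(1)]
    unfolding J_explicit_def by auto
qed

lemma A_f_in_J_explicit: "j \<le> d \<Longrightarrow> A_f R d I j \<in> J_explicit j"
  unfolding A_f_cls J_explicit_def J_cond_def using I_mat_f zero_in_I by (auto simp: mat_f_def)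

lemma mat_unit_in_A_J:
  assumes j: "j \<le> d" and a: "a \<in> {1..d}" and b: "b \<in> {1..d}" and x: "x \<in> I a b"
    and corner: "a \<le> j \<Longrightarrow> b \<le> j \<Longrightarrow> x \<in> I a (j+1)"
  shows "cls (mat_unit a b x) \<in> A_J R d I j"
proof -
  interpret J: ideal "A_J R d I j" Alg by (rule ideal_A_J)
  have xc: "x \<in> carrier R" by (rule I_carrier[of a b]) (use a b x in auto)
  have E: "I_mat (mat_unit a b x)" using I_mat_unit x a b by auto
  consider "j < a" | "j < b" | "a \<le> j" "b \<le> j" "j = d" | "a \<le> j" "b \<le> j" "j < d" using j by linarith
  then show ?thesis
  proof cases
    case 1
    then have "cls (mat_unit a b x) = A_f R d I j \<otimes>\<^bsub>Alg\<^esub> cls (mat_unit a b x)"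
      using A_f_cls Alg_mult_cls I_mat_f E mat_f_mult_unit[OF xc a] by simp
    then show ?thesis using J.I_r_closed[OF A_f_in_A_J cls_in_carrier[OF E]] by simp
  next
    case 2
    then have "cls (mat_unit a b x) = cls (mat_unit a b x) \<otimes>\<^bsub>Alg\<^esub> A_f R d I j"
      using A_f_cls Alg_mult_cls I_mat_f E mat_unit_mult_f[OF xc b] by simp
    then show ?thesis using J.I_l_closed[OF A_f_in_A_J cls_in_carrier[OF E]] by simp
  next
    case 3
    then have "cls (mat_unit a b x) = cls mat_zero"
      using corner E I_mat_zero I_mat_carrier zero_in_I a b
      by (subst cls_eq_iff) (auto simp: mat_unit_def mat_zero_def xc a_minus_def)
    then show ?thesis using Alg_zero J.zero_closed by simp
  next
    case 4
    have j1: "j+1 \<in> {1..d}" using 4 by auto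
    have E1: "I_mat (mat_unit a (j+1) x)" using I_mat_unit corner 4 a j1 by auto
    have E2: "I_mat (mat_unit (j+1) b \<one>)" using I_mat_unit I_eq_carrier[of "j+1" b] b j1 4 by auto
    have "cls (mat_unit a b x)
        = cls (mat_unit a (j+1) x) \<otimes>\<^bsub>Alg\<^esub> A_f R d I j \<otimes>\<^bsub>Alg\<^esub> cls (mat_unit (j+1) b \<one>)"
      using A_f_cls Alg_mult_cls I_mat_f E1 E2 I_mat_mult mat_unit_mult_f[OF xc j1]
        mat_unit_mult_unit[OF xc one_closed j1] xc
      by simp
    moreover have "cls (mat_unit a (j+1) x) \<otimes>\<^bsub>Alg\<^esub> A_f R d I j \<in> A_J R d I j"
      using J.I_l_closed[OF A_f_in_A_J] E1 cls_in_carrier by simp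
    ultimately show ?thesis using J.I_r_closed E2 cls_in_carrier by simp
  qed
qed

lemma A_J_eq_J_explicit:
  assumes j: "j \<le> d"
  shows "A_J R d I j = J_explicit j"
proof
  show "A_J R d I j \<subseteq> J_explicit j"
    unfolding A_J_def using A.genideal_minimal[OF ideal_J_explicit[OF j]] A_f_in_J_explicit[OF j]
    by auto
next
  show "J_explicit j \<subseteq> A_J R d I j"
  proof
    fix z assume "z \<in> J_explicit j"
    then obtain U where U: "I_mat U" "J_cond j U" "z = cls U" unfolding J_explicit_def by blast
    let ?S = "{1..d} \<times> {1..d}"
    let ?T = "\<lambda>p. mat_unit (fst p) (snd p) (U (fst p) (snd p))"
    have T: "I_mat (?T p)" if "p \<in> ?S" for p
      using that U I_mat_entry by (intro I_mat_unit) auto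
    have "finsum Alg (\<lambda>p. cls (?T p)) ?S = cls (\<lambda>i l. \<Oplus>p\<in>?S. ?T p i l)"
      using T by (intro Alg_finsum_cls) auto
    also have "\<dots> = cls U"
    proof (rule cls_cong)
      fix i l assume i: "i \<in> {1..d}" and l: "l \<in> {1..d}"
      have "(\<Oplus>p\<in>?S. ?T p i l) = (\<Oplus>p\<in>?S. if (i, l) = p then U (fst p) (snd p) else \<zero>)"
        unfolding mat_unit_def by (intro finsum_cong') (auto simp: U(1) I_mat_entry_carrier)
      also have "\<dots> = U i l"
        using finsum_singleton[of "(i,l)" ?S "\<lambda>p. U (fst p) (snd p)"] i l U(1) I_mat_entry_carrier
        by auto
      finally show "(\<Oplus>p\<in>?S. ?T p i l) = U i l" .
    qed
    finally have z: "z = finsum Alg (\<lambda>p. cls (?T p)) ?S" using U by simp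
    show "z \<in> A_J R d I j" unfolding z
    proof (rule A.finsum_in_ideal[OF ideal_A_J])
      fix p assume "p \<in> ?S"
      then obtain a b where ab: "p = (a, b)" "a \<in> {1..d}" "b \<in> {1..d}" by auto
      then show "cls (?T p) \<in> A_J R d I j"
        using mat_unit_in_A_J[OF j ab(2,3) I_mat_entry[OF U(1) ab(2,3)]] U(2)
        unfolding J_cond_def by auto
    qed auto
  qed
qed

lemma A_J_0: "A_J R d I 0 = carrier Alg"
proof -
  have "J_explicit 0 = cls ` {U. I_mat U}" unfolding J_explicit_def J_cond_def by auto
  then show ?thesis using A_J_eq_J_explicit[of 0] A_carrier_eq Alg_simps by simp
qed

lemma A_J_d: "A_J R d I d = {\<zero>\<^bsub>Alg\<^esub>}"
proof -
  have "cls U = cls mat_zero" if "I_mat U" "J_cond d U" for U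
    using that I_mat_carrier I_mat_zero unfolding J_cond_def mat_zero_def
    by (subst cls_eq_iff) (auto simp: a_minus_def I_mat_entry_carrier)
  moreover have "J_cond d mat_zero" unfolding J_cond_def mat_zero_def using zero_in_I by auto
  ultimately have "J_explicit d = {cls mat_zero}" unfolding J_explicit_def using I_mat_zero by blast
  then show ?thesis using A_J_eq_J_explicit[of d] Alg_zero by simp
qed

lemma A_J_decreasing:
  assumes "i \<in> {1..d}"
  shows "A_J R d I i \<subseteq> A_J R d I (i - 1)"
proof -
  have "J_cond (i - 1) U" if "J_cond i U" for U
    unfolding J_cond_def
  proof (intro ballI)
    fix a b assume a: "a \<in> {1..i-1}" and b: "b \<in> {1..i-1}"
    have "U a b \<in> I a (i+1)" using that a b unfolding J_cond_def by auto
    moreover have "I a (i+1) \<subseteq> I a i" by (rule I_antimono) (use a assms in auto)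
    ultimately show "U a b \<in> I a (i - 1 + 1)" using assms by auto
  qed
  then have "J_explicit i \<subseteq> J_explicit (i - 1)" unfolding J_explicit_def by blast
  then show ?thesis using assms A_J_eq_J_explicit[of i] A_J_eq_J_explicit[of "i - 1"] by auto
qed

section \<open>Projectivity of \<open>J\<^sub>i\<^sub>-\<^sub>1 / J\<^sub>i\<close>\<close>

lemma cls_mat_mult_cong:
  assumes U: "I_mat U" "I_mat U'" "cls U = cls U'" and V: "mat_carrier V"
  shows "cls (mat_mult U V) = cls (mat_mult U' V)"
proof -
  have UU': "\<forall>a\<in>{1..d}. \<forall>b\<in>{1..d}. U a b \<ominus> U' a b \<in> I a (d+1)"
    using cls_eq_iff U I_mat_carrier by blast
  have c: "mat_carrier (mat_mult U V)" "mat_carrier (mat_mult U' V)"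
    using mat_carrier_mult I_mat_carrier U V by auto
  show ?thesis
  proof (subst cls_eq_iff[OF c], intro ballI)
    fix a b assume a: "a \<in> {1..d}" and b: "b \<in> {1..d}"
    have a1: "a \<in> {1..d+1}" "d+1 \<in> {1..d+1}" using a by auto
    have "mat_mult U V a b \<in> I a (d+1) +> mat_mult U' V a b"
      unfolding mat_mult_def
    proof (rule finsum_mem_a_rcos[OF ideal_I[OF a1]])
      fix m assume m: "m \<in> {1..d}"
      have e: "U a m \<in> carrier R" "U' a m \<in> carrier R" "V m b \<in> carrier R"
        using U V I_mat_entry_carrier mat_carrierD by auto
      have "U a m \<otimes> V m b \<ominus> U' a m \<otimes> V m b = (U a m \<ominus> U' a m) \<otimes> V m b" using e by algebra
      moreover have "(U a m \<ominus> U' a m) \<otimes> V m b \<in> I a (d+1)" using I_r_closed[OF a1] UU' a m e by auto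
      ultimately show "U a m \<otimes> V m b \<in> I a (d+1) +> U' a m \<otimes> V m b"
        using mem_a_rcos_iff[OF ideal_I[OF a1]] e by auto
    qed (simp_all add: I_mat_entry_carrier[OF U(1)] I_mat_entry_carrier[OF U(2)] mat_carrierD[OF V])
    then show "mat_mult U V a b \<ominus> mat_mult U' V a b \<in> I a (d+1)"
      using mem_a_rcos_iff[OF ideal_I[OF a1]] c mat_carrierD by blast
  qed
qed

context
  fixes i :: nat
  assumes i: "i \<in> {1..d}"
begin

lemma A_J_pred_eq: "A_J R d I (i - 1) = J_explicit (i - 1)"
  by (rule A_J_eq_J_explicit) (use i in auto)

lemma A_J_eq: "A_J R d I i = J_explicit i"
  by (rule A_J_eq_J_explicit) (use i in auto)

text \<open>
  The matrix \<open>E\<^sub>l\<^sub>i\<close> is in general not an element of \<open>\<A>(R, I)\<close>; the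
  product \<open>x E\<^sub>l\<^sub>i\<close> is computed on representatives and lies in \<open>\<A>(R, I)\<close> because \<open>x \<in> J\<^sub>i\<^sub>-\<^sub>1\<close>.
\<close>

definition coord :: "nat \<Rightarrow> (nat \<Rightarrow> nat \<Rightarrow> 'a set) \<Rightarrow> nat \<Rightarrow> nat \<Rightarrow> 'a set" where
  "coord l x = cls (mat_mult (rep x) (mat_unit l i \<one>))"

definition basis :: "nat \<Rightarrow> nat \<Rightarrow> nat \<Rightarrow> 'a set" where
  "basis l = cls (mat_unit i l \<one>)"

lemma A_J_pred_rep:
  assumes "x \<in> A_J R d I (i - 1)"
  shows "I_mat (rep x)" "x = cls (rep x)" "J_cond (i - 1) (rep x)"
proof -
  have x: "x \<in> carrier Alg" by (rule ideal.Icarr[OF ideal_A_J assms])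
  show "I_mat (rep x)" "x = cls (rep x)" using rep[OF x] by auto
  then show "J_cond (i - 1) (rep x)"
    using assms A_J_pred_eq J_explicit_J_cond[of "i - 1" "rep x"] i by auto
qed

lemma I_mat_coord:
  assumes U: "I_mat U" "J_cond (i - 1) U" and l: "l \<in> {1..i}"
  shows "I_mat (mat_mult U (mat_unit l i \<one>))"
proof -
  have l': "l \<in> {1..d}" using l i by auto
  have col: "mat_mult U (mat_unit l i \<one>) a b = (if b = i then U a l else \<zero>)" for a b
    using mat_mult_unit[OF I_mat_carrier[OF U(1)] one_closed] l' I_mat_entry_carrier[OF U(1)]
      by simp
  have "U a l \<in> I a i" if "a \<in> {1..d}" for a
  proof -
    have "l \<le> i" using l by simp
    then consider "a < i" "l < i" | "l = i" | "i \<le> a" by linarith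
    then show ?thesis
    proof cases
      case 1
      then have "U a l \<in> I a (i - 1 + 1)" using U(2) l that unfolding J_cond_def by auto
      then show ?thesis using i by simp
    next
      case 2
      then show ?thesis using I_mat_entry[OF U(1)] that l' by auto
    next
      case 3
      then show ?thesis using I_eq_carrier[of a i] that i I_mat_entry_carrier[OF U(1)] by auto
    qed
  qed
  then show ?thesis
    unfolding I_mat_def
      using col zero_in_I
        mat_carrier_mult[OF I_mat_carrier[OF U(1)] mat_carrier_unit[OF one_closed]]
    by auto
qed

lemma coord_carrier: "l \<in> {1..i} \<Longrightarrow> x \<in> A_J R d I (i - 1) \<Longrightarrow> coord l x \<in> carrier Alg"
  unfolding coord_def using A_J_pred_rep I_mat_coord cls_in_carrier by blast

lemma coord_eq:
  assumes "I_mat U" "x = cls U" "x \<in> A_J R d I (i - 1)"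
  shows "coord l x = cls (mat_mult U (mat_unit l i \<one>))"
proof -
  note R = A_J_pred_rep[OF assms(3)]
  have "cls (rep x) = cls U" by (simp only: R(2)[symmetric] assms(2)[symmetric])
  then show ?thesis
    unfolding coord_def
      by (rule cls_mat_mult_cong[OF R(1) assms(1) _ mat_carrier_unit[OF one_closed]])
qed

lemma coord_mult:
  assumes l: "l \<in> {1..i}" and a: "a \<in> carrier Alg" and x: "x \<in> A_J R d I (i - 1)"
  shows "coord l (a \<otimes>\<^bsub>Alg\<^esub> x) = a \<otimes>\<^bsub>Alg\<^esub> coord l x"
proof -
  obtain W where W: "I_mat W" "a = cls W" using A_carrierE a by blast
  note U = A_J_pred_rep[OF x]
  have "a \<otimes>\<^bsub>Alg\<^esub> x = cls (mat_mult W (rep x))"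
    using Alg_mult_cls[OF W(1) U(1)] by (simp only: W(2) U(2)[symmetric])
  moreover have "a \<otimes>\<^bsub>Alg\<^esub> x \<in> A_J R d I (i - 1)" using ideal.I_l_closed[OF ideal_A_J x a] .
  ultimately have "coord l (a \<otimes>\<^bsub>Alg\<^esub> x) = cls (mat_mult (mat_mult W (rep x)) (mat_unit l i \<one>))"
    using coord_eq I_mat_mult[OF W(1) U(1)] by blast
  also have "\<dots> = cls (mat_mult W (mat_mult (rep x) (mat_unit l i \<one>)))"
    using mat_mult_assoc W U I_mat_carrier mat_carrier_unit by simp
  also have "\<dots> = a \<otimes>\<^bsub>Alg\<^esub> coord l x"
    unfolding coord_def using Alg_mult_cls[OF W(1) I_mat_coord[OF U(1,3) l]] W by simp
  finally show ?thesis .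
qed

lemma coord_add:
  assumes l: "l \<in> {1..i}" and x: "x \<in> A_J R d I (i - 1)" and y: "y \<in> A_J R d I (i - 1)"
  shows "coord l (x \<oplus>\<^bsub>Alg\<^esub> y) = coord l x \<oplus>\<^bsub>Alg\<^esub> coord l y"
proof -
  note U = A_J_pred_rep[OF x] and V = A_J_pred_rep[OF y]
  have "x \<oplus>\<^bsub>Alg\<^esub> y = cls (mat_add (rep x) (rep y))"
    using Alg_add_cls[OF U(1) V(1)] by (simp only: U(2)[symmetric] V(2)[symmetric])
  moreover have "x \<oplus>\<^bsub>Alg\<^esub> y \<in> A_J R d I (i - 1)"
    using additive_subgroup.a_closed[OF ideal.axioms(1)[OF ideal_A_J] x y] .
  ultimately have "coord l (x \<oplus>\<^bsub>Alg\<^esub> y) = cls (mat_mult (mat_add (rep x) (rep y)) (mat_unit l i \<one>))"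
    using coord_eq I_mat_add[OF U(1) V(1)] by blast
  also have "\<dots> = cls (mat_add (mat_mult (rep x) (mat_unit l i \<one>))
      (mat_mult (rep y) (mat_unit l i \<one>)))"
    using mat_add_mult_distrib U V I_mat_carrier mat_carrier_unit by simp
  also have "\<dots> = coord l x \<oplus>\<^bsub>Alg\<^esub> coord l y"
    unfolding coord_def using Alg_add_cls[OF I_mat_coord[OF U(1,3) l] I_mat_coord[OF V(1,3) l]]
      by simp
  finally show ?thesis .
qed

lemma coord_A_J:
  assumes l: "l \<in> {1..i}" and x: "x \<in> A_J R d I i"
  shows "coord l x \<in> A_J R d I i"
proof -
  have "x \<in> A_J R d I (i - 1)" using A_J_decreasing[OF i] x by blast
  note U = A_J_pred_rep[OF this]
  have Ji: "J_cond i (rep x)" using x A_J_eq J_explicit_J_cond[of i] i U by auto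
  have "J_cond i (mat_mult (rep x) (mat_unit l i \<one>))"
    using mat_mult_unit[OF I_mat_carrier[OF U(1)] one_closed] Ji l i zero_in_I
      I_mat_entry_carrier[OF U(1)]
    unfolding J_cond_def by auto
  then show ?thesis
    unfolding A_J_eq coord_def J_explicit_def using I_mat_coord[OF U(1,3) l] by blast
qed

lemma basis_in_A_J_pred:
  assumes "l \<in> {1..i}"
  shows "basis l \<in> A_J R d I (i - 1)"
proof -
  have "I_mat (mat_unit i l \<one>)" using I_mat_unit[of \<one> i l] I_eq_carrier[of i l] i assms by auto
  moreover have "J_cond (i - 1) (mat_unit i l \<one>)"
    unfolding J_cond_def mat_unit_def using zero_in_I i by auto
  ultimately show ?thesis unfolding A_J_pred_eq basis_def J_explicit_def by blast
qed

lemma sum_coord_mult_basis: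
  assumes x: "x \<in> A_J R d I (i - 1)"
  shows "(\<Oplus>\<^bsub>Alg\<^esub>l\<in>{1..i}. coord l x \<otimes>\<^bsub>Alg\<^esub> basis l)
    = cls (\<lambda>a b. if b \<in> {1..i} then rep x a b else \<zero>)"
proof -
  note U = A_J_pred_rep[OF x]
  have E: "I_mat (mat_unit l l \<one>)" "I_mat (mat_unit i l \<one>)" if "l \<in> {1..i}" for l
    using that i I_mat_unit[of \<one>] I_eq_carrier by auto
  have UE: "I_mat (mat_mult (rep x) (mat_unit l l \<one>))" if "l \<in> {1..i}" for l
    using I_mat_mult[OF U(1) E(1)[OF that]] .
  have "coord l x \<otimes>\<^bsub>Alg\<^esub> basis l = cls (mat_mult (rep x) (mat_unit l l \<one>))" if l: "l \<in> {1..i}" for l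
    unfolding coord_def basis_def
    using Alg_mult_cls[OF I_mat_coord[OF U(1,3) l] E(2)[OF l]] i
      mat_mult_assoc[OF I_mat_carrier[OF U(1)] mat_carrier_unit[OF one_closed] mat_carrier_unit[OF one_closed]]
      mat_unit_mult_unit[of \<one> \<one> i l l]
    by simp
  then have "(\<Oplus>\<^bsub>Alg\<^esub>l\<in>{1..i}. coord l x \<otimes>\<^bsub>Alg\<^esub> basis l)
      = (\<Oplus>\<^bsub>Alg\<^esub>l\<in>{1..i}. cls (mat_mult (rep x) (mat_unit l l \<one>)))"
    using UE cls_in_carrier by (intro A.finsum_cong') auto
  also have "\<dots> = cls (\<lambda>a b. \<Oplus>l\<in>{1..i}. mat_mult (rep x) (mat_unit l l \<one>) a b)"
    using UE by (intro Alg_finsum_cls) auto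
  also have "\<dots> = cls (\<lambda>a b. if b \<in> {1..i} then rep x a b else \<zero>)"
  proof (rule cls_cong)
    fix a b
    have "(\<Oplus>l\<in>{1..i}. mat_mult (rep x) (mat_unit l l \<one>) a b)
        = (\<Oplus>l\<in>{1..i}. if b = l then rep x a l else \<zero>)"
      using mat_mult_unit[OF I_mat_carrier[OF U(1)] one_closed] i I_mat_entry_carrier[OF U(1)]
      by (intro finsum_cong') auto
    then show "(\<Oplus>l\<in>{1..i}. mat_mult (rep x) (mat_unit l l \<one>) a b)
        = (if b \<in> {1..i} then rep x a b else \<zero>)"
      using I_mat_entry_carrier[OF U(1)] by (simp add: finsum_if_eq)
  qed
  finally show ?thesis .
qed

lemma dual_basis_A_J:
  assumes x: "x \<in> A_J R d I (i - 1)"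
  shows "x \<ominus>\<^bsub>Alg\<^esub> (\<Oplus>\<^bsub>Alg\<^esub>l\<in>{1..i}. coord l x \<otimes>\<^bsub>Alg\<^esub> basis l) \<in> A_J R d I i"
proof -
  note U = A_J_pred_rep[OF x]
  define T where "T = (\<lambda>a b. if b \<in> {1..i} then rep x a b else \<zero>)"
  have T: "I_mat T"
    using U(1) i zero_in_I unfolding T_def I_mat_def mat_carrier_def by auto
  have "x \<ominus>\<^bsub>Alg\<^esub> (\<Oplus>\<^bsub>Alg\<^esub>l\<in>{1..i}. coord l x \<otimes>\<^bsub>Alg\<^esub> basis l) = cls (rep x) \<ominus>\<^bsub>Alg\<^esub> cls T"
    using sum_coord_mult_basis[OF x, folded T_def] by (simp only: U(2)[symmetric])
  also have "\<dots> = cls (mat_add (rep x) (mat_neg T))" by (rule Alg_minus_cls[OF U(1) T])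
  finally have "x \<ominus>\<^bsub>Alg\<^esub> (\<Oplus>\<^bsub>Alg\<^esub>l\<in>{1..i}. coord l x \<otimes>\<^bsub>Alg\<^esub> basis l)
      = cls (mat_add (rep x) (mat_neg T))" .
  moreover have "J_cond i (mat_add (rep x) (mat_neg T))"
    using I_mat_entry_carrier[OF U(1)] zero_in_I i
    unfolding J_cond_def mat_add_def mat_neg_def T_def by (auto simp: r_neg)
  ultimately show ?thesis
    unfolding A_J_eq J_explicit_def using I_mat_add[OF U(1) I_mat_neg[OF T]] by blast
qed

lemma projective_A_J:
  "projective_lmod TYPE('z) (Alg Quot A_J R d I i)
    (quot_submodule Alg (A_J R d I (i - 1)) (A_J R d I i))"
proof -
  interpret quotient_dual_basis Alg "A_J R d I i" "A_J R d I (i - 1)" "{1..i}" basis coord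
    by (rule quotient_dual_basis.intro[OF A.ring_axioms quotient_dual_basis_axioms.intro])
      (fact ideal_A_J A_J_decreasing[OF i] finite_atLeastAtMost basis_in_A_J_pred coord_carrier
        coord_mult coord_add coord_A_J dual_basis_A_J)+
  show ?thesis by (rule projective)
qed

section \<open>The corner ring \<open>e\<^sub>i (\<A> / J\<^sub>i) e\<^sub>i\<close>\<close>

definition diag_unit :: "'a \<Rightarrow> nat \<Rightarrow> nat \<Rightarrow> 'a set" where
  "diag_unit r = cls (mat_unit i i r)"

lemma I_mat_diag_unit: "r \<in> carrier R \<Longrightarrow> I_mat (mat_unit i i r)"
  using I_mat_unit[of r i i] I_eq_carrier[of i i] i by auto

lemma diag_unit_carrier: "r \<in> carrier R \<Longrightarrow> diag_unit r \<in> carrier Alg"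
  unfolding diag_unit_def using I_mat_diag_unit cls_in_carrier by blast

lemma diag_unit_mult:
  "r \<in> carrier R \<Longrightarrow> s \<in> carrier R \<Longrightarrow> diag_unit r \<otimes>\<^bsub>Alg\<^esub> diag_unit s = diag_unit (r \<otimes> s)"
  unfolding diag_unit_def
    using Alg_mult_cls[OF I_mat_diag_unit I_mat_diag_unit] mat_unit_mult_unit[of r s i i i] i
  by simp

lemma diag_unit_add:
  assumes "r \<in> carrier R" "s \<in> carrier R"
  shows "diag_unit r \<oplus>\<^bsub>Alg\<^esub> diag_unit s = diag_unit (r \<oplus> s)"
proof -
  have "mat_add (mat_unit i i r) (mat_unit i i s) = mat_unit i i (r \<oplus> s)"
    unfolding mat_add_def mat_unit_def using assms by (intro ext) auto
  then show ?thesis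
    unfolding diag_unit_def
      using Alg_add_cls[OF I_mat_diag_unit[OF assms(1)] I_mat_diag_unit[OF assms(2)]] by simp
qed

lemma diag_unit_in_A_J_iff:
  assumes "t \<in> carrier R"
  shows "diag_unit t \<in> A_J R d I i \<longleftrightarrow> t \<in> I i (i+1)"
proof
  assume "diag_unit t \<in> A_J R d I i"
  then have "J_cond i (mat_unit i i t)"
    using A_J_eq J_explicit_J_cond[of i] I_mat_diag_unit[OF assms] i unfolding diag_unit_def by auto
  then have "mat_unit i i t i i \<in> I i (i+1)" unfolding J_cond_def using i by auto
  then show "t \<in> I i (i+1)" by (simp add: mat_unit_def)
next
  assume "t \<in> I i (i+1)"
  then have "J_cond i (mat_unit i i t)" unfolding J_cond_def mat_unit_def using zero_in_I i by auto
  then show "diag_unit t \<in> A_J R d I i"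
    unfolding A_J_eq diag_unit_def J_explicit_def using I_mat_diag_unit[OF assms] by blast
qed

lemma A_e_eq_diag_unit: "A_e R d I i = diag_unit \<one>"
  unfolding diag_unit_def using A_e_cls[OF i] .

lemma A_e_sandwich:
  assumes x: "x \<in> carrier Alg"
  shows "A_e R d I i \<otimes>\<^bsub>Alg\<^esub> x \<otimes>\<^bsub>Alg\<^esub> A_e R d I i = diag_unit (rep x i i)"
proof -
  define U where "U = rep x"
  have U: "I_mat U" "x = cls U" using rep[OF x] unfolding U_def by auto
  have "mat_mult (mat_mult (mat_unit i i \<one>) U) (mat_unit i i \<one>) = mat_unit i i (U i i)"
  proof (intro ext)
    fix a b
    have row: "mat_mult (mat_unit i i \<one>) U a' b' = (if a' = i then U i b' else \<zero>)" for a' b'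
      using mat_unit_mult[OF I_mat_carrier[OF U(1)] one_closed] i I_mat_entry_carrier[OF U(1)]
        by simp
    have "mat_mult (mat_mult (mat_unit i i \<one>) U) (mat_unit i i \<one>) a b
        = (if b = i then mat_mult (mat_unit i i \<one>) U a i \<otimes> \<one> else \<zero>)"
      using mat_mult_unit[OF mat_carrier_mult[OF mat_carrier_unit[OF one_closed] I_mat_carrier[OF U(1)]] one_closed] i
      by simp
    also have "\<dots> = mat_unit i i (U i i) a b"
      using I_mat_entry_carrier[OF U(1)]
      by (cases "a = i"; cases "b = i") (simp_all add: row mat_unit_def[of i i "U i i"])
    finally show
        "mat_mult (mat_mult (mat_unit i i \<one>) U) (mat_unit i i \<one>) a b = mat_unit i i (U i i) a b" .
  qed
  then show ?thesis
    unfolding A_e_eq_diag_unit diag_unit_def U_def[symmetric]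
    using U Alg_mult_cls I_mat_diag_unit I_mat_mult by simp
qed

abbreviation corner_idem :: "(nat \<Rightarrow> nat \<Rightarrow> 'a set) set" where
  "corner_idem \<equiv> A_J R d I i +>\<^bsub>Alg\<^esub> A_e R d I i"

definition corner_map :: "'a \<Rightarrow> (nat \<Rightarrow> nat \<Rightarrow> 'a set) set" where
  "corner_map r = A_J R d I i +>\<^bsub>Alg\<^esub> diag_unit r"

lemma quotient_corner_idem:
  "corner_idem \<in> carrier (Alg Quot A_J R d I i)"
  "corner_idem \<otimes>\<^bsub>Alg Quot A_J R d I i\<^esub> corner_idem = corner_idem"
  using A.FactRing_mult_rcos[OF ideal_A_J] A.mem_FactRing_iff[OF ideal_A_J] diag_unit_carrier
    diag_unit_mult
  unfolding A_e_eq_diag_unit by auto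

lemma corner_map_sandwich:
  assumes "r \<in> carrier R"
  shows "corner_idem \<otimes>\<^bsub>Alg Quot A_J R d I i\<^esub> corner_map r \<otimes>\<^bsub>Alg Quot A_J R d I i\<^esub> corner_idem =
      corner_map r"
  using assms A.FactRing_mult_rcos[OF ideal_A_J] diag_unit_carrier diag_unit_mult
  unfolding corner_map_def A_e_eq_diag_unit by simp

lemma corner_map_hom:
  "corner_map \<in> ring_hom R (corner_ring (Alg Quot A_J R d I i) corner_idem)"
proof (rule ring_hom_memI)
  fix r assume r: "r \<in> carrier R"
  show "corner_map r \<in> carrier (corner_ring (Alg Quot A_J R d I i) corner_idem)"
    using ring.mem_corner_ring_iff[OF ideal.quotient_is_ring[OF ideal_A_J] quotient_corner_idem]
      corner_map_sandwich[OF r] A.mem_FactRing_iff[OF ideal_A_J] diag_unit_carrier[OF r]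
    unfolding corner_map_def by blast
next
  fix r s assume "r \<in> carrier R" "s \<in> carrier R"
  then show "corner_map (r \<otimes> s)
      = corner_map r \<otimes>\<^bsub>corner_ring (Alg Quot A_J R d I i) corner_idem\<^esub> corner_map s"
    and "corner_map (r \<oplus> s)
      = corner_map r \<oplus>\<^bsub>corner_ring (Alg Quot A_J R d I i) corner_idem\<^esub> corner_map s"
    unfolding corner_map_def ring.corner_ring_simps[OF ideal.quotient_is_ring[OF ideal_A_J]]
    using A.FactRing_mult_rcos[OF ideal_A_J] A.FactRing_add_rcos[OF ideal_A_J]
      diag_unit_carrier diag_unit_mult diag_unit_add by simp_all
next
  show "corner_map \<one> = \<one>\<^bsub>corner_ring (Alg Quot A_J R d I i) corner_idem\<^esub>"
    unfolding corner_map_def ring.corner_ring_simps[OF ideal.quotient_is_ring[OF ideal_A_J]]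
      A_e_eq_diag_unit ..
qed

lemma corner_map_surj:
  "corner_map ` carrier R = carrier (corner_ring (Alg Quot A_J R d I i) corner_idem)"
proof
  show "corner_map ` carrier R \<subseteq> carrier (corner_ring (Alg Quot A_J R d I i) corner_idem)"
    using ring_hom_memE(1)[OF corner_map_hom] by blast
next
  show "carrier (corner_ring (Alg Quot A_J R d I i) corner_idem) \<subseteq> corner_map ` carrier R"
  proof
    fix z assume "z \<in> carrier (corner_ring (Alg Quot A_J R d I i) corner_idem)"
    then obtain Y where Y: "Y \<in> carrier (Alg Quot A_J R d I i)"
      "z = corner_idem \<otimes>\<^bsub>Alg Quot A_J R d I i\<^esub> Y \<otimes>\<^bsub>Alg Quot A_J R d I i\<^esub> corner_idem"
      unfolding corner_ring_def by auto
    obtain x where x: "x \<in> carrier Alg" "Y = A_J R d I i +>\<^bsub>Alg\<^esub> x"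
      using A.mem_FactRing_iff[OF ideal_A_J] Y(1) by blast
    have e: "A_e R d I i \<in> carrier Alg" using diag_unit_carrier unfolding A_e_eq_diag_unit by simp
    have "z = corner_map (rep x i i)"
      unfolding Y(2) x(2) corner_map_def A_e_sandwich[OF x(1), symmetric]
      using A.FactRing_mult_rcos[OF ideal_A_J] e x(1) by simp
    moreover have "rep x i i \<in> carrier R" using rep[OF x(1)] I_mat_entry_carrier by blast
    ultimately show "z \<in> corner_map ` carrier R" by blast
  qed
qed

lemma corner_map_kernel:
  "a_kernel R (corner_ring (Alg Quot A_J R d I i) corner_idem) corner_map = I i (i+1)"
proof -
  have "corner_map r = A_J R d I i \<longleftrightarrow> r \<in> I i (i+1)" if r: "r \<in> carrier R" for r
    using ideal.rcos_const_imp_mem[OF ideal_A_J diag_unit_carrier[OF r]]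
      A.a_rcos_zero[OF ideal_A_J] diag_unit_in_A_J_iff[OF r]
    unfolding corner_map_def by blast
  moreover have "I i (i+1) \<subseteq> carrier R" using I_carrier[of i "i+1"] i by auto
  ultimately show ?thesis
    unfolding a_kernel_def' ring.corner_ring_simps[OF ideal.quotient_is_ring[OF ideal_A_J]]
    by (auto simp: FactRing_def)
qed

lemma corner_A_e_iso:
  "corner_ring (Alg Quot A_J R d I i) corner_idem \<simeq> R Quot I i (i+1)"
proof -
  have "ring_hom_ring R (corner_ring (Alg Quot A_J R d I i) corner_idem) corner_map"
    using ring_hom_ringI2[OF ring_axioms
        ring.corner_ring_is_ring[OF ideal.quotient_is_ring[OF ideal_A_J] quotient_corner_idem]
        corner_map_hom] .
  then have "R Quot I i (i+1) \<simeq> corner_ring (Alg Quot A_J R d I i) corner_idem"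
    using ring_hom_ring.FactRing_iso[OF _ corner_map_surj] corner_map_kernel by metis
  then show ?thesis
    using ring_iso_sym ideal.quotient_is_ring[OF ideal_I] i by fastforce
qed

end

end

theorem theorem3p6:
  fixes R :: "'a ring" and d :: nat and I :: "nat \<Rightarrow> nat \<Rightarrow> 'a set"
  assumes "ring R"
    and "d_system R d I"
  shows "A_J R d I 0 = carrier (A_ring R d I)
       \<and> A_J R d I d = {\<zero>\<^bsub>A_ring R d I\<^esub>}
       \<and> (\<forall>i \<in> {1..d}.
            A_J R d I i \<subseteq> A_J R d I (i - 1)
          \<and> A_J R d I i \<cdot>\<^bsub>A_ring R d I\<^esub> A_J R d I i = A_J R d I i
          \<and> projective_lmod TYPE('b) (A_ring R d I Quot A_J R d I i)
              (quot_submodule (A_ring R d I) (A_J R d I (i - 1)) (A_J R d I i))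
          \<and> corner_ring (A_ring R d I Quot A_J R d I i) (A_J R d I i +>\<^bsub>A_ring R d I\<^esub> A_e R d I i)
              \<simeq> R Quot I i (i + 1))"
proof -
  interpret d_system_ring R d I by (intro d_system_ring.intro d_system_ring_axioms.intro assms)
  show ?thesis
    using A_J_0 A_J_d A_J_decreasing A_J_idempotent projective_A_J corner_A_e_iso by blast
qed

end
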